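(* Consider the Hermitean matrix model of size $\mathcal{N}+1$ described in the context, with correlation functions $G_{|a_1\dots a_N|}$, and set $W_{|a|}:=2\lambda G_{|a|}+2E_a$ and $P_{ab}:=\frac{1}{E_a^2-E_b^2}$. Then for every $N\geq 2$ and every pairwise different indices $a_1,\dots,a_N\in\{0,\dots,\mathcal{N}\}$, \[ G_{|a_1a_2\dots a_N|}=\frac{\lambda^{N-2}}{2}\sum_{k=1}^N W_{|a_k|}\prod_{l=1,\,l\neq k}^N P_{a_ka_l}. \]
   Context: Fix an integer $\mathcal{N}\geq 1$, a constant $V>0$, a coupling constant $\lambda$ (real or complex), a constant $\kappa$, a mass $\mu>0$ and a differentiable strictly increasing function $e:\mathbb{R}_+\to\mathbb{R}_+$ with $e(0)=0$; put $E_m:=\mu^2\big(\frac12+e\big(\frac{m}{\mu^2V}\big)\big)$, $m=0,\dots,\mathcal{N}$, and $E=\mathrm{diag}(E_0,\dots,E_{\mathcal{N}})$. For Hermitean $(\mathcal{N}+1)\times(\mathcal{N}+1)$ matrices $\Phi$ let $S[\Phi]=V\,\mathrm{tr}(E\Phi^2+\kappa\Phi+\frac{\lambda}{3}\Phi^3)$ and define the partition function $\mathcal{Z}[J]=\int\mathcal{D}\Phi\,\exp(-S[\Phi]+V\,\mathrm{tr}(J\Phi))$ for a source matrix $J$, understood as a formal perturbation series in $\lambda$ (i.e. $\mathcal{Z}[J]=K\exp\big(-\frac{\lambda}{3V^2}\sum_{m,n,k}\frac{\partial^3}{\partial J_{mn}\partial J_{nk}\partial J_{km}}\big)\exp\big(\sum_{m,n}\frac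 V2(J_{nm}-\kappa\delta_{nm})\frac{1}{E_n+E_m}(J_{mn}-\kappa\delta_{nm})\big)$), with the entries $J_{mn}$ treated as independent variables. Write $\frac{\partial^N}{\partial\mathbb{J}_{a_1\dots a_N}}:=\frac{\partial^N}{\partial J_{a_1a_2}\cdots\partial J_{a_{N-1}a_N}\partial J_{a_Na_1}}$. The correlation functions are the coefficients of the expansion of $\log(\mathcal{Z}[J]/\mathcal{Z}[0])$ in cycles of source matrices; for pairwise different indices they are given by \[ G_{|a^1_1\dots a^1_{N_1}|\dots|a^B_1\dots a^B_{N_B}|}=V^{B-2}\frac{\partial^{N_1}}{\partial\mathbb{J}_{a^1_1\dots a^1_{N_1}}}\cdots\frac{\partial^{N_B}}{\partial\mathbb{J}_{a^B_1\dots a^B_{N_B}}}\log\frac{\mathcal{Z}[J]}{\mathcal{Z}[0]}\Big|_{J=0}; \] in particular $G_{|a|}=\frac1V\frac{\partial}{\partial J_{aa}}\log\frac{\mathcal{Z}[J]}{\mathcal{Z}[0]}\big|_{J=0}$ and $G_{|a_1\dots a_N|}$ is the case $B=1$. *)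

theory Defs
  imports "HOL-Analysis.Analysis" "HOL-Computational_Algebra.Formal_Power_Series"
begin

definition Eval :: "real \<Rightarrow> real \<Rightarrow> (real \<Rightarrow> real) \<Rightarrow> nat \<Rightarrow> real" where
  "Eval \<mu> V e m = \<mu>^2 * (1/2 + e (real m / (\<mu>^2 * V)))"

text \<open>Source matrices: J (m,n) = J_mn, complex, entries treated as independent variables.\<close>
type_synonym source = "nat \<times> nat \<Rightarrow> complex"

definition Qsrc :: "nat \<Rightarrow> real \<Rightarrow> real \<Rightarrow> (nat \<Rightarrow> real) \<Rightarrow> source \<Rightarrow> complex" where
  "Qsrc NN V \<kappa> E J =
     (\<Sum>m\<le>NN. \<Sum>n\<le>NN.
        complex_of_real (V/2) * (J (n,m) - (if n = m then complex_of_real \<kappa> else 0))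
        * (J (m,n) - (if n = m then complex_of_real \<kappa> else 0)) / complex_of_real (E n + E m))"

fun pd :: "(nat \<times> nat) list \<Rightarrow> (source \<Rightarrow> complex) \<Rightarrow> source \<Rightarrow> complex" where
  "pd [] f = f"
| "pd (p # ps) f = (\<lambda>J. deriv (\<lambda>t. pd ps f (J(p := t))) (J p))"

definition D3 :: "nat \<Rightarrow> (source \<Rightarrow> complex) \<Rightarrow> source \<Rightarrow> complex" where
  "D3 NN g = (\<lambda>J. \<Sum>m\<le>NN. \<Sum>n\<le>NN. \<Sum>k\<le>NN. pd [(m,n),(n,k),(k,m)] g J)"

text \<open>Partition function Z[J] (up to the constant K, which cancels in Z[J]/Z[0])
  as a formal power series in the coupling lambda:
  exp(-lambda/(3V^2) D3) exp(Q(J)).\<close>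
definition Zser :: "nat \<Rightarrow> real \<Rightarrow> real \<Rightarrow> (nat \<Rightarrow> real) \<Rightarrow> source \<Rightarrow> complex fps" where
  "Zser NN V \<kappa> E J = Abs_fps (\<lambda>n.
     complex_of_real ((- 1 / (3 * V^2)) ^ n / fact n)
     * ((D3 NN ^^ n) (\<lambda>J'. exp (Qsrc NN V \<kappa> E J')) J))"

definition fps_log :: "complex fps \<Rightarrow> complex fps" where
  "fps_log f = fps_const (Ln (fps_nth f 0)) + (fps_ln 1 oo (f / fps_const (fps_nth f 0) - 1))"

definition logZ :: "nat \<Rightarrow> real \<Rightarrow> real \<Rightarrow> (nat \<Rightarrow> real) \<Rightarrow> source \<Rightarrow> complex fps" where
  "logZ NN V \<kappa> E J = fps_log (Zser NN V \<kappa> E J / Zser NN V \<kappa> E (\<lambda>_. 0))"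

definition cycle_idx :: "nat list \<Rightarrow> (nat \<times> nat) list" where
  "cycle_idx as = zip as (tl as @ [hd as])"

text \<open>One-boundary correlation function G_{|a1...aN|} (B = 1, factor V^{B-2} = 1/V),
  a formal power series in lambda.\<close>
definition Gcorr :: "nat \<Rightarrow> real \<Rightarrow> real \<Rightarrow> (nat \<Rightarrow> real) \<Rightarrow> nat list \<Rightarrow> complex fps" where
  "Gcorr NN V \<kappa> E as = Abs_fps (\<lambda>n.
     complex_of_real (1 / V) * pd (cycle_idx as) (\<lambda>J. fps_nth (logZ NN V \<kappa> E J) n) (\<lambda>_. 0))"

end

theory Submission
  imports Defs
begin

unbundle no vec_syntax
notation fps_nth (infixl "$" 75)

text \<open>The partition function is the cubic interaction operator exp(-\<lambda>/(3V^2) D3) applied to a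
  Gaussian in the source. The Gaussian satisfies a Ward identity, coming from the invariance of
  the free measure under unitary rotations. Since D3 commutes with the Ward operator
  L_ab = \<Sum>_n (J_bn \<partial>_an - J_na \<partial>_nb) and with J_ba up to terms of lower order in \<lambda>, the identity
  propagates to Z, and since L_ab is a derivation it passes to log Z:
  (E_a^2 - E_b^2) \<partial>_ab log Z = V (E_a - E_b) J_ba + \<lambda> L_ab log Z.
  Taking the remaining cyclic derivatives \<partial>_a2a3 ... \<partial>_aNa1 at J = 0 yields the recursion
  (E_a1^2 - E_a2^2) G_|a1 a2 ...| = \<lambda> (G_|a1 a3 ...| - G_|a2 a3 ...|), with the extra term
  E_a1 - E_a2 when N = 2. This is the recursion of divided differences, solved by the stated
  formula. The coupling \<lambda> is the formal variable fps_X throughout.\<close>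

section \<open>Exponential polynomials in the source\<close>

text \<open>The partial derivative pd is built from deriv, which returns junk for non-differentiable
  functions. All functions occurring below lie in the following class, on which pd is a genuine
  derivative obeying the usual calculus rules.\<close>

inductive_set exp_poly :: "(source \<Rightarrow> complex) set" where
  exp_poly_const: "(\<lambda>J. c) \<in> exp_poly"
| exp_poly_coord: "(\<lambda>J. J p) \<in> exp_poly"
| exp_poly_add: "f \<in> exp_poly \<Longrightarrow> g \<in> exp_poly \<Longrightarrow> (\<lambda>J. f J + g J) \<in> exp_poly"
| exp_poly_mult: "f \<in> exp_poly \<Longrightarrow> g \<in> exp_poly \<Longrightarrow> (\<lambda>J. f J * g J) \<in> exp_poly"
| exp_poly_exp: "f \<in> exp_poly \<Longrightarrow> (\<lambda>J. exp (f J)) \<in> exp_poly"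

lemma exp_poly_has_partial_derivative:
  assumes "f \<in> exp_poly"
  shows "\<exists>f'\<in>exp_poly. \<forall>J. ((\<lambda>t. f (J(p := t))) has_field_derivative f' J) (at (J p))"
  using assms
proof induction
  case (exp_poly_const c)
  show ?case by (intro bexI[of _ "\<lambda>J. 0"]) (auto intro: exp_poly.intros)
next
  case (exp_poly_coord q)
  show ?case
    by (intro bexI[of _ "\<lambda>J. if q = p then 1 else 0"])
       (auto intro!: exp_poly.intros derivative_eq_intros)
next
  case (exp_poly_add f g)
  then obtain f' g' where "f' \<in> exp_poly" "g' \<in> exp_poly"
    and "\<And>J. ((\<lambda>t. f (J(p := t))) has_field_derivative f' J) (at (J p))"
      "\<And>J. ((\<lambda>t. g (J(p := t))) has_field_derivative g' J) (at (J p))" by blast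
  then show ?case by (intro bexI[of _ "\<lambda>J. f' J + g' J"] allI DERIV_add exp_poly.intros)
next
  case (exp_poly_mult f g)
  then obtain f' g' where "f' \<in> exp_poly" "g' \<in> exp_poly"
    and d: "\<And>J. ((\<lambda>t. f (J(p := t))) has_field_derivative f' J) (at (J p))"
      "\<And>J. ((\<lambda>t. g (J(p := t))) has_field_derivative g' J) (at (J p))" by blast
  have has_deriv: "((\<lambda>t. f (J(p := t)) * g (J(p := t))) has_field_derivative f' J * g J + f J * g' J)
      (at (J p))" for J
    using DERIV_mult[OF d(1)[of J] d(2)[of J]] by (simp add: mult.commute)
  have mem: "(\<lambda>J. f' J * g J + f J * g' J) \<in> exp_poly"
    by (intro exp_poly.intros \<open>f' \<in> exp_poly\<close> \<open>g' \<in> exp_poly\<close> exp_poly_mult.hyps)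
  show ?case using has_deriv mem by meson
next
  case (exp_poly_exp f)
  then obtain f' where "f' \<in> exp_poly"
    and d: "\<And>J. ((\<lambda>t. f (J(p := t))) has_field_derivative f' J) (at (J p))" by blast
  have has_deriv: "((\<lambda>t. exp (f (J(p := t)))) has_field_derivative exp (f J) * f' J) (at (J p))" for J
    using DERIV_chain2[OF DERIV_exp d, of J] by simp
  have mem: "(\<lambda>J. exp (f J) * f' J) \<in> exp_poly"
    by (intro exp_poly.intros \<open>f' \<in> exp_poly\<close> exp_poly_exp.hyps)
  show ?case using has_deriv mem by meson
qed

declare pd.simps(2) [simp del]

lemma pd_Cons: "pd (p # ps) f = pd [p] (pd ps f)"
  by (simp add: pd.simps(2))

lemma pd_append: "pd (xs @ ys) f = pd xs (pd ys f)"
  by (induction xs arbitrary: f) (simp_all add: pd.simps(2))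

lemma pd_single_eqI:
  assumes "\<And>J. ((\<lambda>t. f (J(p := t))) has_field_derivative g J) (at (J p))"
  shows "pd [p] f = g"
  using assms DERIV_imp_deriv by (auto intro!: ext simp: pd.simps(2))

lemma
  assumes "f \<in> exp_poly"
  shows exp_poly_pd_single: "pd [p] f \<in> exp_poly"
    and has_field_derivative_pd:
      "((\<lambda>t. f (J(p := t))) has_field_derivative pd [p] f J) (at (J p))"
proof -
  obtain f' where "f' \<in> exp_poly"
    and f': "\<And>J. ((\<lambda>t. f (J(p := t))) has_field_derivative f' J) (at (J p))"
    using exp_poly_has_partial_derivative[OF assms] by blast
  moreover have "pd [p] f = f'" by (rule pd_single_eqI) (rule f')
  ultimately show "pd [p] f \<in> exp_poly"
    "((\<lambda>t. f (J(p := t))) has_field_derivative pd [p] f J) (at (J p))" by auto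
qed

lemma exp_poly_pd: "f \<in> exp_poly \<Longrightarrow> pd ps f \<in> exp_poly"
proof (induction ps)
  case (Cons p ps)
  then show ?case by (simp only: pd_Cons[of p ps] exp_poly_pd_single)
qed simp

lemma exp_poly_cmult: "f \<in> exp_poly \<Longrightarrow> (\<lambda>J. c * f J) \<in> exp_poly"
  by (intro exp_poly.intros)

lemma exp_poly_uminus: "f \<in> exp_poly \<Longrightarrow> (\<lambda>J. - f J) \<in> exp_poly"
  using exp_poly_cmult[of f "-1"] by simp

lemma exp_poly_diff: "f \<in> exp_poly \<Longrightarrow> g \<in> exp_poly \<Longrightarrow> (\<lambda>J. f J - g J) \<in> exp_poly"
  using exp_poly_add[OF _ exp_poly_uminus[of g]] by simp

lemma exp_poly_coord_mult: "f \<in> exp_poly \<Longrightarrow> (\<lambda>J. J q * f J) \<in> exp_poly"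
  by (intro exp_poly.intros)

lemma exp_poly_sum:
  "finite A \<Longrightarrow> (\<And>i. i \<in> A \<Longrightarrow> f i \<in> exp_poly) \<Longrightarrow> (\<lambda>J. \<Sum>i\<in>A. f i J) \<in> exp_poly"
  by (induction A rule: finite_induct) (auto intro: exp_poly.intros)

lemma pd_const: "pd [p] (\<lambda>J. c) = (\<lambda>J. 0)"
  by (rule pd_single_eqI) auto

lemma pd_coord: "pd [p] (\<lambda>J. J q) = (\<lambda>J. of_bool (p = q))"
  by (rule pd_single_eqI) (auto intro!: derivative_eq_intros)

lemma pd_add:
  "f \<in> exp_poly \<Longrightarrow> g \<in> exp_poly \<Longrightarrow> pd [p] (\<lambda>J. f J + g J) = (\<lambda>J. pd [p] f J + pd [p] g J)"
  by (rule pd_single_eqI) (rule DERIV_add; rule has_field_derivative_pd; simp)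

lemma pd_mult:
  assumes "f \<in> exp_poly" "g \<in> exp_poly"
  shows "pd [p] (\<lambda>J. f J * g J) = (\<lambda>J. pd [p] f J * g J + f J * pd [p] g J)"
proof (rule pd_single_eqI)
  fix J
  show "((\<lambda>t. f (J(p := t)) * g (J(p := t))) has_field_derivative pd [p] f J * g J + f J * pd [p] g J)
      (at (J p))"
    using DERIV_mult[OF has_field_derivative_pd[OF assms(1), where p=p and J=J]
        has_field_derivative_pd[OF assms(2), where p=p and J=J]]
    by (simp add: mult.commute)
qed

lemma pd_exp:
  assumes "f \<in> exp_poly"
  shows "pd [p] (\<lambda>J. exp (f J)) = (\<lambda>J. exp (f J) * pd [p] f J)"
proof (rule pd_single_eqI)
  fix J
  show "((\<lambda>t. exp (f (J(p := t)))) has_field_derivative exp (f J) * pd [p] f J) (at (J p))"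
    using DERIV_chain2[OF DERIV_exp has_field_derivative_pd[OF assms, where p=p and J=J]] by simp
qed

lemma pd_cmult: "f \<in> exp_poly \<Longrightarrow> pd [p] (\<lambda>J. c * f J) = (\<lambda>J. c * pd [p] f J)"
  by (simp add: pd_mult exp_poly_const pd_const)

lemma pd_diff:
  "f \<in> exp_poly \<Longrightarrow> g \<in> exp_poly \<Longrightarrow> pd [p] (\<lambda>J. f J - g J) = (\<lambda>J. pd [p] f J - pd [p] g J)"
  using pd_add[OF _ exp_poly_uminus[of g], of f p] pd_cmult[of g p "-1"] by simp

lemma pd_sum:
  "finite A \<Longrightarrow> (\<And>i. i \<in> A \<Longrightarrow> f i \<in> exp_poly) \<Longrightarrow>
   pd [p] (\<lambda>J. \<Sum>i\<in>A. f i J) = (\<lambda>J. \<Sum>i\<in>A. pd [p] (f i) J)"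
proof (induction A rule: finite_induct)
  case (insert x F)
  then show ?case using pd_add[of "f x" "\<lambda>J. \<Sum>i\<in>F. f i J" p] exp_poly_sum[of F f] by simp
qed (simp add: pd_const)

lemma pd_coord_mult:
  "f \<in> exp_poly \<Longrightarrow> pd [p] (\<lambda>J. J q * f J) = (\<lambda>J. of_bool (p = q) * f J + J q * pd [p] f J)"
  by (simp add: pd_mult exp_poly_coord pd_coord)

lemma pd_commute:
  assumes "f \<in> exp_poly"
  shows "pd [p] (pd [q] f) = pd [q] (pd [p] f)"
  using assms
proof induction
  case (exp_poly_mult f g)
  then have "pd [a] f \<in> exp_poly" "pd [a] g \<in> exp_poly"
    "pd [a] (pd [b] f) \<in> exp_poly" "pd [a] (pd [b] g) \<in> exp_poly" for a b
    by (auto intro: exp_poly_pd_single)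
  with exp_poly_mult show ?case
    by (simp only: pd_mult pd_add exp_poly.intros) (auto simp: algebra_simps)
next
  case (exp_poly_exp f)
  then have "pd [a] f \<in> exp_poly" "pd [a] (pd [b] f) \<in> exp_poly" "(\<lambda>J. exp (f J)) \<in> exp_poly"
    for a b
    by (auto intro: exp_poly_pd_single exp_poly.intros)
  with exp_poly_exp show ?case
    by (simp only: pd_mult pd_exp pd_add exp_poly.intros) (auto simp: algebra_simps)
qed (simp_all only: pd_const pd_coord pd_add exp_poly_pd_single)

lemma pd_list_add:
  "f \<in> exp_poly \<Longrightarrow> g \<in> exp_poly \<Longrightarrow> pd ps (\<lambda>J. f J + g J) = (\<lambda>J. pd ps f J + pd ps g J)"
proof (induction ps)
  case (Cons p ps)
  then show ?case by (simp add: pd_Cons[of p ps] pd_add exp_poly_pd)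
qed simp

lemma pd_list_cmult: "f \<in> exp_poly \<Longrightarrow> pd ps (\<lambda>J. c * f J) = (\<lambda>J. c * pd ps f J)"
proof (induction ps)
  case (Cons p ps)
  then show ?case by (simp add: pd_Cons[of p ps] pd_cmult exp_poly_pd)
qed simp

lemma pd_list_diff:
  "f \<in> exp_poly \<Longrightarrow> g \<in> exp_poly \<Longrightarrow> pd ps (\<lambda>J. f J - g J) = (\<lambda>J. pd ps f J - pd ps g J)"
proof (induction ps)
  case (Cons p ps)
  then show ?case by (simp add: pd_Cons[of p ps] pd_diff exp_poly_pd)
qed simp

lemma pd_list_sum:
  "finite A \<Longrightarrow> (\<And>i. i \<in> A \<Longrightarrow> f i \<in> exp_poly) \<Longrightarrow>
   pd ps (\<lambda>J. \<Sum>i\<in>A. f i J) = (\<lambda>J. \<Sum>i\<in>A. pd ps (f i) J)"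
proof (induction ps)
  case (Cons p ps)
  then show ?case by (simp add: pd_Cons[of p ps] pd_sum exp_poly_pd)
qed simp

lemma pd_coord_mult_notin:
  "f \<in> exp_poly \<Longrightarrow> q \<notin> set ps \<Longrightarrow> pd ps (\<lambda>J. J q * f J) = (\<lambda>J. J q * pd ps f J)"
proof (induction ps)
  case (Cons p ps)
  then show ?case by (auto simp add: pd_Cons[of p ps] pd_coord_mult exp_poly_pd)
qed simp

lemma pd_swap: "f \<in> exp_poly \<Longrightarrow> pd (xs @ p # q # ys) f = pd (xs @ q # p # ys) f"
  using pd_commute[OF exp_poly_pd[of f ys], where p=p and q=q]
  by (simp only: pd_append pd_Cons[of p "q # ys"] pd_Cons[of q "p # ys"] pd_Cons[of p ys] pd_Cons[of q ys])

lemma pd_move_front: "f \<in> exp_poly \<Longrightarrow> pd (ys @ x # zs) f = pd (x # ys @ zs) f"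
proof (induction ys arbitrary: zs rule: rev_induct)
  case (snoc y ys)
  have "pd ((ys @ [y]) @ x # zs) f = pd (ys @ x # y # zs) f"
    using pd_swap[OF snoc.prems, of ys y x zs] by simp
  also have "\<dots> = pd (x # ys @ y # zs) f" using snoc by simp
  finally show ?case by simp
qed simp

lemma pd_perm: "f \<in> exp_poly \<Longrightarrow> mset xs = mset ys \<Longrightarrow> pd xs f = pd ys f"
proof (induction xs arbitrary: ys)
  case (Cons x xs)
  then obtain ys1 ys2 where ys: "ys = ys1 @ x # ys2"
    by (metis list.set_intros(1) set_mset_mset split_list)
  with Cons.prems have "mset xs = mset (ys1 @ ys2)" by simp
  then have "pd xs f = pd (ys1 @ ys2) f" using Cons by blast
  then show ?case using pd_move_front[OF Cons.prems(1), of ys1 x ys2] ys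
    by (simp add: pd_Cons[of x xs] pd_Cons[of x "ys1 @ ys2"])
qed simp

lemma pd_pd_commute: "f \<in> exp_poly \<Longrightarrow> pd xs (pd ys f) = pd ys (pd xs f)"
  unfolding pd_append[symmetric] by (rule pd_perm) simp_all

section \<open>The cubic interaction operator\<close>

lemma pd3_coord_mult:
  assumes f: "f \<in> exp_poly"
  shows "pd [a,b,c] (\<lambda>J. J q * f J) J = J q * pd [a,b,c] f J + of_bool (a = q) * pd [b,c] f J
      + of_bool (b = q) * pd [c,a] f J + of_bool (c = q) * pd [a,b] f J"
proof -
  have e3: "pd [a,b,c] g = pd [a] (pd [b] (pd [c] g))" for g
    by (simp only: pd_Cons[of a "[b,c]"] pd_Cons[of b "[c]"])
  have e2: "pd [a,b] g = pd [a] (pd [b] g)" for a b g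
    by (simp only: pd_Cons[of a "[b]"])
  have "pd [c,a] f = pd [a,c] f" using f by (rule pd_perm) simp
  then show ?thesis unfolding e3 e2 using f
    by (simp add: pd_coord_mult pd_add pd_cmult exp_poly_coord_mult exp_poly_cmult exp_poly_add
        exp_poly_pd_single algebra_simps pd_const)
qed

lemma sum_sum_delta_pair:
  fixes h :: "nat \<Rightarrow> nat \<Rightarrow> 'a::comm_semiring_1"
  assumes "x \<le> N" "y \<le> N"
  shows "(\<Sum>m\<le>N. \<Sum>n\<le>N. of_bool ((m,n) = (x,y)) * h m n) = h x y"
proof -
  have "(\<Sum>m\<le>N. \<Sum>n\<le>N. of_bool ((m,n) = (x,y)) * h m n) = (\<Sum>m\<le>N. if m = x then h m y else 0)"
    using assms by (intro sum.cong refl) (auto simp: if_distrib cong: if_cong)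
  also have "\<dots> = h x y" using assms by simp
  finally show ?thesis .
qed

lemma sum_triple_rotate:
  "(\<Sum>m\<le>N. \<Sum>n\<le>N. \<Sum>k\<le>N. F m n k) = (\<Sum>m\<le>N. \<Sum>n\<le>N. \<Sum>k\<le>N. F n k m)"
proof -
  have "(\<Sum>m\<le>N. \<Sum>n\<le>N. \<Sum>k\<le>N. F n k m) = (\<Sum>m\<le>N. \<Sum>n\<le>N. \<Sum>k\<le>N. F m n k)"
    by (subst sum.swap, subst (2) sum.swap) (simp add: sum.swap[of "\<lambda>_ _. _"])
  then show ?thesis ..
qed

definition contract2 :: "nat \<Rightarrow> nat \<Rightarrow> nat \<Rightarrow> (source \<Rightarrow> complex) \<Rightarrow> source \<Rightarrow> complex" where
  "contract2 NN x y f = (\<lambda>J. \<Sum>n\<le>NN. pd [(y,n),(n,x)] f J)"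

definition ward_op :: "nat \<Rightarrow> nat \<Rightarrow> nat \<Rightarrow> (source \<Rightarrow> complex) \<Rightarrow> source \<Rightarrow> complex" where
  "ward_op NN a b f = (\<lambda>J. \<Sum>n\<le>NN. J (b,n) * pd [(a,n)] f J - J (n,a) * pd [(n,b)] f J)"

lemma exp_poly_D3: "f \<in> exp_poly \<Longrightarrow> D3 NN f \<in> exp_poly"
  unfolding D3_def by (intro exp_poly_sum exp_poly_pd) auto

lemma exp_poly_D3_pow: "f \<in> exp_poly \<Longrightarrow> (D3 NN ^^ k) f \<in> exp_poly"
  by (induction k) (auto intro: exp_poly_D3)

lemma exp_poly_contract2: "f \<in> exp_poly \<Longrightarrow> contract2 NN x y f \<in> exp_poly"
  unfolding contract2_def by (intro exp_poly_sum exp_poly_pd) auto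

lemma exp_poly_ward_op: "f \<in> exp_poly \<Longrightarrow> ward_op NN a b f \<in> exp_poly"
  unfolding ward_op_def by (intro exp_poly_sum exp_poly_diff exp_poly_coord_mult exp_poly_pd) auto

lemma D3_add:
  "f \<in> exp_poly \<Longrightarrow> g \<in> exp_poly \<Longrightarrow> D3 NN (\<lambda>J. f J + g J) = (\<lambda>J. D3 NN f J + D3 NN g J)"
  unfolding D3_def by (simp add: pd_list_add sum.distrib)

lemma D3_cmult: "f \<in> exp_poly \<Longrightarrow> D3 NN (\<lambda>J. c * f J) = (\<lambda>J. c * D3 NN f J)"
  unfolding D3_def by (simp add: pd_list_cmult sum_distrib_left)

lemma D3_diff:
  "f \<in> exp_poly \<Longrightarrow> g \<in> exp_poly \<Longrightarrow> D3 NN (\<lambda>J. f J - g J) = (\<lambda>J. D3 NN f J - D3 NN g J)"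
  unfolding D3_def by (simp add: pd_list_diff sum_subtractf)

lemma D3_sum:
  assumes "finite A" "\<And>i. i \<in> A \<Longrightarrow> f i \<in> exp_poly"
  shows "D3 NN (\<lambda>J. \<Sum>i\<in>A. f i J) = (\<lambda>J. \<Sum>i\<in>A. D3 NN (f i) J)"
proof -
  have "D3 NN (\<lambda>J. \<Sum>i\<in>A. f i J)
      = (\<lambda>J. \<Sum>m\<le>NN. \<Sum>n\<le>NN. \<Sum>k\<le>NN. \<Sum>i\<in>A. pd [(m,n),(n,k),(k,m)] (f i) J)"
    unfolding D3_def using assms by (simp add: pd_list_sum)
  also have "\<dots> = (\<lambda>J. \<Sum>i\<in>A. D3 NN (f i) J)"
    unfolding D3_def by (intro ext) (simp only: sum.swap[of _ A])
  finally show ?thesis .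
qed

lemma pd_D3: "f \<in> exp_poly \<Longrightarrow> pd ps (D3 NN f) = D3 NN (pd ps f)"
  unfolding D3_def by (simp add: pd_list_sum exp_poly_sum exp_poly_pd pd_pd_commute)

lemma pd_D3_pow: "f \<in> exp_poly \<Longrightarrow> pd ps ((D3 NN ^^ k) f) = (D3 NN ^^ k) (pd ps f)"
  by (induction k) (simp_all add: pd_D3 exp_poly_D3_pow)

lemma D3_pow_cmult: "f \<in> exp_poly \<Longrightarrow> (D3 NN ^^ k) (\<lambda>J. c * f J) = (\<lambda>J. c * (D3 NN ^^ k) f J)"
  by (induction k) (simp_all add: D3_cmult exp_poly_D3_pow)

lemma contract2_eq_delta_sum:
  assumes "x \<le> NN" "y \<le> NN"
  shows "(\<Sum>m\<le>NN. \<Sum>n\<le>NN. \<Sum>k\<le>NN. of_bool ((m,n) = (x,y)) * pd [(n,k),(k,m)] f J)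
    = contract2 NN x y f J"
  unfolding contract2_def using sum_sum_delta_pair[OF assms]
  by (simp add: sum_distrib_left[symmetric])

text \<open>Each of the three derivatives in D3 may hit the factor J (x,y); up to a cyclic
  relabelling of the summation indices the three contributions agree.\<close>

lemma D3_coord_mult:
  assumes f: "f \<in> exp_poly" and xy: "x \<le> NN" "y \<le> NN"
  shows "D3 NN (\<lambda>J. J (x,y) * f J) = (\<lambda>J. J (x,y) * D3 NN f J + 3 * contract2 NN x y f J)"
proof
  fix J
  let ?q = "(x,y)"
  define A where "A m n k = of_bool ((m,n) = ?q) * pd [(n,k),(k,m)] f J" for m n k
  have "D3 NN (\<lambda>J. J ?q * f J) J = J ?q * D3 NN f J
     + (\<Sum>m\<le>NN. \<Sum>n\<le>NN. \<Sum>k\<le>NN. A m n k) + (\<Sum>m\<le>NN. \<Sum>n\<le>NN. \<Sum>k\<le>NN. A n k m)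
     + (\<Sum>m\<le>NN. \<Sum>n\<le>NN. \<Sum>k\<le>NN. A k m n)"
    unfolding D3_def A_def using pd3_coord_mult[OF f]
    by (simp add: sum.distrib sum_distrib_left)
  also have "(\<Sum>m\<le>NN. \<Sum>n\<le>NN. \<Sum>k\<le>NN. A n k m) = (\<Sum>m\<le>NN. \<Sum>n\<le>NN. \<Sum>k\<le>NN. A m n k)"
    using sum_triple_rotate[of "\<lambda>m n k. A k m n"] sum_triple_rotate[of A] by simp
  also have "(\<Sum>m\<le>NN. \<Sum>n\<le>NN. \<Sum>k\<le>NN. A k m n) = (\<Sum>m\<le>NN. \<Sum>n\<le>NN. \<Sum>k\<le>NN. A m n k)"
    using sum_triple_rotate[of "\<lambda>m n k. A k m n"] by simp
  finally show "D3 NN (\<lambda>J. J ?q * f J) J = J ?q * D3 NN f J + 3 * contract2 NN x y f J"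
    using contract2_eq_delta_sum[OF xy, of f J] unfolding A_def by simp
qed

lemma D3_contract2: "f \<in> exp_poly \<Longrightarrow> D3 NN (contract2 NN x y f) = contract2 NN x y (D3 NN f)"
  unfolding contract2_def by (simp add: D3_sum exp_poly_pd pd_D3)

lemma D3_pow_contract2:
  "f \<in> exp_poly \<Longrightarrow> (D3 NN ^^ k) (contract2 NN x y f) = contract2 NN x y ((D3 NN ^^ k) f)"
  by (induction k) (simp_all add: D3_contract2 exp_poly_D3_pow exp_poly_contract2)

lemma D3_pow_coord_mult:
  assumes f: "f \<in> exp_poly" and xy: "x \<le> NN" "y \<le> NN"
  shows "(D3 NN ^^ k) (\<lambda>J. J (x,y) * f J)
     = (\<lambda>J. J (x,y) * (D3 NN ^^ k) f J + 3 * of_nat k * contract2 NN x y ((D3 NN ^^ (k - 1)) f) J)"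
proof (induction k)
  case (Suc k)
  have "(D3 NN ^^ Suc k) (\<lambda>J. J (x,y) * f J)
      = D3 NN (\<lambda>J. J (x,y) * (D3 NN ^^ k) f J + 3 * of_nat k * contract2 NN x y ((D3 NN ^^ (k - 1)) f) J)"
    using Suc by simp
  also have "\<dots> = (\<lambda>J. J (x,y) * (D3 NN ^^ Suc k) f J + 3 * contract2 NN x y ((D3 NN ^^ k) f) J
       + 3 * of_nat k * contract2 NN x y (D3 NN ((D3 NN ^^ (k - 1)) f)) J)"
    using f xy
    by (simp add: D3_add D3_coord_mult D3_cmult D3_contract2 exp_poly_D3_pow exp_poly_contract2
        exp_poly_coord_mult exp_poly_cmult)
  also have "\<dots> = (\<lambda>J. J (x,y) * (D3 NN ^^ Suc k) f J
       + 3 * of_nat (Suc k) * contract2 NN x y ((D3 NN ^^ (Suc k - 1)) f) J)"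
    by (cases k) (simp_all add: algebra_simps)
  finally show ?case .
qed simp

lemma D3_ward_op:
  assumes f: "f \<in> exp_poly" and ab: "a \<le> NN" "b \<le> NN"
  shows "D3 NN (ward_op NN a b f) = ward_op NN a b (D3 NN f)"
proof
  fix J
  have "D3 NN (ward_op NN a b f) J
      = (\<Sum>n\<le>NN. D3 NN (\<lambda>J. J (b,n) * pd [(a,n)] f J - J (n,a) * pd [(n,b)] f J) J)"
    unfolding ward_op_def using f by (simp add: D3_sum exp_poly_diff exp_poly_coord_mult exp_poly_pd)
  also have "\<dots> = ward_op NN a b (D3 NN f) J + 3 *
      ((\<Sum>n\<le>NN. contract2 NN b n (pd [(a,n)] f) J) - (\<Sum>n\<le>NN. contract2 NN n a (pd [(n,b)] f) J))"
    unfolding ward_op_def using f ab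
    by (simp add: D3_diff D3_coord_mult exp_poly_coord_mult exp_poly_pd pd_D3
        sum.distrib sum_subtractf algebra_simps sum_distrib_left)
  also have "(\<Sum>n\<le>NN. contract2 NN b n (pd [(a,n)] f) J) = (\<Sum>n\<le>NN. contract2 NN n a (pd [(n,b)] f) J)"
  proof -
    have "pd [(n,m),(m,b)] (pd [(a,n)] f) = pd [(a,n),(n,m)] (pd [(m,b)] f)" for n m
      unfolding pd_append[symmetric] using f by (rule pd_perm) (simp add: add_mset_commute)
    then have "(\<Sum>n\<le>NN. contract2 NN b n (pd [(a,n)] f) J)
        = (\<Sum>n\<le>NN. \<Sum>m\<le>NN. pd [(a,n),(n,m)] (pd [(m,b)] f) J)"
      unfolding contract2_def by simp
    also have "\<dots> = (\<Sum>m\<le>NN. \<Sum>n\<le>NN. pd [(a,n),(n,m)] (pd [(m,b)] f) J)"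
      by (rule sum.swap)
    finally show ?thesis unfolding contract2_def .
  qed
  finally show "D3 NN (ward_op NN a b f) J = ward_op NN a b (D3 NN f) J" by simp
qed

lemma D3_pow_ward_op:
  "f \<in> exp_poly \<Longrightarrow> a \<le> NN \<Longrightarrow> b \<le> NN \<Longrightarrow>
   (D3 NN ^^ k) (ward_op NN a b f) = ward_op NN a b ((D3 NN ^^ k) f)"
  by (induction k) (simp_all add: D3_ward_op exp_poly_D3_pow)

section \<open>The Gaussian factor\<close>

lemma pd_symmetric_quadratic_form:
  fixes c d :: "nat \<Rightarrow> nat \<Rightarrow> complex"
  assumes xy: "x \<le> N" "y \<le> N"
    and c: "\<And>n m. c n m = c m n" and d: "\<And>n m. d n m = d m n"
  shows "pd [(x,y)] (\<lambda>J. \<Sum>m\<le>N. \<Sum>n\<le>N. c n m * ((J (n,m) - d n m) * (J (m,n) - d n m)))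
    = (\<lambda>J. 2 * c x y * (J (y,x) - d x y))"
proof
  fix J
  have summand: "pd [(x,y)] (\<lambda>J. c n m * ((J (n,m) - d n m) * (J (m,n) - d n m))) J
      = of_bool ((m,n) = (y,x)) * (c x y * (J (y,x) - d x y))
        + of_bool ((m,n) = (x,y)) * (c x y * (J (y,x) - d x y))" for n m
  proof -
    have A: "of_bool ((x,y) = (n,m)) * c n m * (J (m,n) - d n m)
        = of_bool ((m,n) = (y,x)) * (c x y * (J (y,x) - d x y))"
      by (cases "(m,n) = (y,x)") auto
    have B: "of_bool ((x,y) = (m,n)) * c n m * (J (n,m) - d n m)
        = of_bool ((m,n) = (x,y)) * (c x y * (J (y,x) - d x y))"
    proof (cases "(m,n) = (x,y)")
      case True
      then have "m = x" "n = y" by simp_all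
      then show ?thesis using c[of y x] d[of y x] by simp
    qed auto
    have "pd [(x,y)] (\<lambda>J. c n m * ((J (n,m) - d n m) * (J (m,n) - d n m))) J
      = c n m * (of_bool ((x,y) = (n,m)) * (J (m,n) - d n m)
          + (J (n,m) - d n m) * of_bool ((x,y) = (m,n)))"
      by (simp add: pd_cmult pd_mult pd_diff pd_coord pd_const exp_poly_cmult exp_poly_mult
          exp_poly_diff exp_poly_coord exp_poly_const)
    also have "\<dots> = of_bool ((x,y) = (n,m)) * c n m * (J (m,n) - d n m)
        + of_bool ((x,y) = (m,n)) * c n m * (J (n,m) - d n m)"
      by (simp only: distrib_left mult_ac)
    finally show ?thesis by (simp only: A B)
  qed
  have "pd [(x,y)] (\<lambda>J. \<Sum>m\<le>N. \<Sum>n\<le>N. c n m * ((J (n,m) - d n m) * (J (m,n) - d n m))) J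
      = (\<Sum>m\<le>N. \<Sum>n\<le>N. of_bool ((m,n) = (y,x)) * (c x y * (J (y,x) - d x y)))
        + (\<Sum>m\<le>N. \<Sum>n\<le>N. of_bool ((m,n) = (x,y)) * (c x y * (J (y,x) - d x y)))"
    by (simp add: pd_sum exp_poly_sum exp_poly_cmult exp_poly_mult exp_poly_diff exp_poly_coord
        exp_poly_const summand sum.distrib)
  also have "\<dots> = 2 * c x y * (J (y,x) - d x y)"
    unfolding sum_sum_delta_pair[OF xy(2,1)] sum_sum_delta_pair[OF xy] by simp
  finally show "pd [(x,y)] (\<lambda>J. \<Sum>m\<le>N. \<Sum>n\<le>N. c n m * ((J (n,m) - d n m) * (J (m,n) - d n m))) J
      = 2 * c x y * (J (y,x) - d x y)" .
qed

definition propagator :: "real \<Rightarrow> (nat \<Rightarrow> real) \<Rightarrow> nat \<Rightarrow> nat \<Rightarrow> complex" where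
  "propagator V E x y = complex_of_real (V / (E x + E y))"

definition kappa_diag :: "real \<Rightarrow> nat \<Rightarrow> nat \<Rightarrow> complex" where
  "kappa_diag \<kappa> x y = (if x = y then complex_of_real \<kappa> else 0)"

lemma Qsrc_eq_quadratic_form:
  "Qsrc NN V \<kappa> E = (\<lambda>J. \<Sum>m\<le>NN. \<Sum>n\<le>NN. complex_of_real (V/2) / complex_of_real (E n + E m)
     * ((J (n,m) - kappa_diag \<kappa> n m) * (J (m,n) - kappa_diag \<kappa> n m)))"
  by (simp add: fun_eq_iff Qsrc_def kappa_diag_def mult.assoc)

lemma exp_poly_Qsrc: "Qsrc NN V \<kappa> E \<in> exp_poly"
  unfolding Qsrc_eq_quadratic_form
  by (intro exp_poly_sum exp_poly_cmult exp_poly_mult exp_poly_diff exp_poly.intros) auto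

lemma pd_Qsrc:
  assumes "x \<le> NN" "y \<le> NN"
  shows "pd [(x,y)] (Qsrc NN V \<kappa> E) = (\<lambda>J. propagator V E x y * (J (y,x) - kappa_diag \<kappa> x y))"
proof -
  have "2 * (complex_of_real (V/2) / complex_of_real (E x + E y))
      = complex_of_real (2 * ((V/2) / (E x + E y)))"
    by (simp only: of_real_mult of_real_divide of_real_numeral)
  also have "\<dots> = propagator V E x y" unfolding propagator_def times_divide_eq_right by simp
  finally have "2 * (complex_of_real (V/2) / complex_of_real (E x + E y)) = propagator V E x y" .
  then show ?thesis
    unfolding Qsrc_eq_quadratic_form
    by (subst pd_symmetric_quadratic_form[OF assms]) (auto simp: kappa_diag_def add.commute)
qed

definition gauss :: "nat \<Rightarrow> real \<Rightarrow> real \<Rightarrow> (nat \<Rightarrow> real) \<Rightarrow> source \<Rightarrow> complex" where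
  "gauss NN V \<kappa> E = (\<lambda>J. exp (Qsrc NN V \<kappa> E J))"

lemma exp_poly_gauss: "gauss NN V \<kappa> E \<in> exp_poly"
  unfolding gauss_def using exp_poly_exp[OF exp_poly_Qsrc[of NN V \<kappa> E]] by simp

lemma pd_gauss:
  assumes "x \<le> NN" "y \<le> NN"
  shows "pd [(x,y)] (gauss NN V \<kappa> E)
    = (\<lambda>J. gauss NN V \<kappa> E J * (propagator V E x y * (J (y,x) - kappa_diag \<kappa> x y)))"
  unfolding gauss_def using pd_exp[OF exp_poly_Qsrc[of NN V \<kappa> E], of "(x,y)"] pd_Qsrc[OF assms]
  by simp

lemma pd_gauss_offdiag:
  assumes "a \<le> NN" "b \<le> NN" "a \<noteq> b"
  shows "pd [(a,b)] (gauss NN V \<kappa> E) = (\<lambda>J. propagator V E a b * (J (b,a) * gauss NN V \<kappa> E J))"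
  using pd_gauss[OF assms(1,2)] assms(3) by (simp add: kappa_diag_def algebra_simps)

lemma pd2_gauss:
  assumes "a \<le> NN" "b \<le> NN" "n \<le> NN" "a \<noteq> b"
  shows "pd [(a,n),(n,b)] (gauss NN V \<kappa> E) = (\<lambda>J. gauss NN V \<kappa> E J
     * (propagator V E a n * (J (n,a) - kappa_diag \<kappa> a n))
     * (propagator V E n b * (J (b,n) - kappa_diag \<kappa> n b)))"
  using assms
  by (simp add: pd_Cons[of "(a,n)" "[(n,b)]"] pd_gauss pd_mult exp_poly_gauss exp_poly_cmult
      exp_poly_diff exp_poly_coord exp_poly_const pd_cmult pd_diff pd_coord pd_const)

lemma ward_summand_identity:
  fixes s1 s2 V A B \<alpha> \<beta> :: "'a::field"
  assumes "s1 \<noteq> 0" "s2 \<noteq> 0" "\<alpha> * \<beta> = 0"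
  shows "(s1 - s2) * ((V/s1) * (A - \<alpha>)) * ((V/s2) * (B - \<beta>))
      + V * (B * ((V/s1) * (A - \<alpha>)) - A * ((V/s2) * (B - \<beta>)))
     = V * (A * \<beta> * (V/s1) - \<alpha> * B * (V/s2))"
proof -
  have "\<alpha> * \<beta> * V * V * (s1 - s2) = 0" using assms(3) by simp
  then show ?thesis using assms(1,2) by (simp add: field_simps)
qed

lemma gauss_ward_summand:
  assumes "a \<le> NN" "b \<le> NN" "n \<le> NN" "a \<noteq> b" and Epos: "\<And>n. E n > 0"
  shows "complex_of_real (E a - E b) * pd [(a,n),(n,b)] (gauss NN V \<kappa> E) J
      + complex_of_real V * (J (b,n) * pd [(a,n)] (gauss NN V \<kappa> E) J
        - J (n,a) * pd [(n,b)] (gauss NN V \<kappa> E) J)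
    = gauss NN V \<kappa> E J * complex_of_real V * (J (n,a) * kappa_diag \<kappa> n b * propagator V E a n
        - kappa_diag \<kappa> a n * J (b,n) * propagator V E n b)"
proof -
  let ?g = "gauss NN V \<kappa> E J" and ?s = "\<lambda>x y. complex_of_real (E x + E y)"
  have nz: "?s x y \<noteq> 0" for x y
    using Epos[of x] Epos[of y] by (metis add_pos_pos of_real_eq_0_iff less_irrefl)
  have diff: "complex_of_real (E a - E b) = ?s a n - ?s n b"
    by simp
  have kk: "kappa_diag \<kappa> a n * kappa_diag \<kappa> n b = 0"
    using assms(4) unfolding kappa_diag_def by auto
  have prop_eq: "propagator V E x y = complex_of_real V / ?s x y" for x y
    unfolding propagator_def by simp
  have "complex_of_real (E a - E b) * pd [(a,n),(n,b)] (gauss NN V \<kappa> E) J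
      + complex_of_real V * (J (b,n) * pd [(a,n)] (gauss NN V \<kappa> E) J
        - J (n,a) * pd [(n,b)] (gauss NN V \<kappa> E) J)
    = ?g * ((?s a n - ?s n b) * (propagator V E a n * (J (n,a) - kappa_diag \<kappa> a n))
          * (propagator V E n b * (J (b,n) - kappa_diag \<kappa> n b))
        + complex_of_real V * (J (b,n) * (propagator V E a n * (J (n,a) - kappa_diag \<kappa> a n))
          - J (n,a) * (propagator V E n b * (J (b,n) - kappa_diag \<kappa> n b))))"
    using assms(1-4) unfolding diff by (simp add: pd2_gauss pd_gauss algebra_simps del: of_real_add)
  also have "\<dots> = ?g * complex_of_real V * (J (n,a) * kappa_diag \<kappa> n b * propagator V E a n
        - kappa_diag \<kappa> a n * J (b,n) * propagator V E n b)"
    unfolding prop_eq ward_summand_identity[OF nz nz kk] by (simp only: mult.assoc)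
  finally show ?thesis .
qed

text \<open>The \<kappa>-terms left over by the summands cancel in the sum over n.\<close>

lemma contract2_gauss:
  assumes ab: "a \<le> NN" "b \<le> NN" "a \<noteq> b" and Epos: "\<And>n. E n > 0"
  shows "complex_of_real (E a - E b) * contract2 NN b a (gauss NN V \<kappa> E) J
    = - complex_of_real V * ward_op NN a b (gauss NN V \<kappa> E) J"
proof -
  let ?g = "gauss NN V \<kappa> E J"
  have "complex_of_real (E a - E b) * contract2 NN b a (gauss NN V \<kappa> E) J
      + complex_of_real V * ward_op NN a b (gauss NN V \<kappa> E) J
    = ?g * complex_of_real V * ((\<Sum>n\<le>NN. J (n,a) * kappa_diag \<kappa> n b * propagator V E a n)
        - (\<Sum>n\<le>NN. kappa_diag \<kappa> a n * J (b,n) * propagator V E n b))"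
    unfolding contract2_def ward_op_def sum_distrib_left sum.distrib[symmetric] sum_subtractf[symmetric]
    using ab by (intro sum.cong refl) (rule gauss_ward_summand[OF _ _ _ _ Epos]; simp)
  also have "(\<Sum>n\<le>NN. J (n,a) * kappa_diag \<kappa> n b * propagator V E a n)
      = (\<Sum>n\<le>NN. if n = b then J (b,a) * kappa_diag \<kappa> b b * propagator V E a b else 0)"
    by (intro sum.cong refl) (auto simp: kappa_diag_def)
  also have "\<dots> = (\<Sum>n\<le>NN. if n = a then kappa_diag \<kappa> a a * J (b,a) * propagator V E a b else 0)"
    using ab by (simp add: kappa_diag_def)
  also have "\<dots> = (\<Sum>n\<le>NN. kappa_diag \<kappa> a n * J (b,n) * propagator V E n b)"
    by (intro sum.cong refl) (auto simp: kappa_diag_def)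
  finally show ?thesis by (simp add: eq_neg_iff_add_eq_0)
qed

lemma contract2_D3_pow_gauss:
  assumes ab: "a \<le> NN" "b \<le> NN" "a \<noteq> b" and Epos: "\<And>n. E n > 0" and Eab: "E a \<noteq> E b"
  shows "contract2 NN b a ((D3 NN ^^ k) (gauss NN V \<kappa> E))
    = (\<lambda>J. - (complex_of_real V / complex_of_real (E a - E b))
        * ward_op NN a b ((D3 NN ^^ k) (gauss NN V \<kappa> E)) J)"
proof -
  let ?g = "gauss NN V \<kappa> E"
  have "contract2 NN b a ?g
      = (\<lambda>J. - (complex_of_real V / complex_of_real (E a - E b)) * ward_op NN a b ?g J)"
    using contract2_gauss[OF ab Epos] Eab by (force simp: field_simps)
  then show ?thesis
    by (metis D3_pow_contract2 D3_pow_cmult D3_pow_ward_op exp_poly_gauss exp_poly_ward_op ab(1,2))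
qed

lemma ward_identity_D3_pow:
  assumes ab: "a \<le> NN" "b \<le> NN" "a \<noteq> b" and Epos: "\<And>n. E n > 0" and Eab: "E a \<noteq> E b"
  shows "complex_of_real (E a ^ 2 - E b ^ 2) * pd [(a,b)] ((D3 NN ^^ k) (gauss NN V \<kappa> E)) J
     = complex_of_real (V * (E a - E b)) * J (b,a) * (D3 NN ^^ k) (gauss NN V \<kappa> E) J
       - 3 * of_nat k * complex_of_real V ^ 2 * ward_op NN a b ((D3 NN ^^ (k - 1)) (gauss NN V \<kappa> E)) J"
proof -
  let ?g = "gauss NN V \<kappa> E"
  have "pd [(a,b)] ((D3 NN ^^ k) ?g) = (D3 NN ^^ k) (\<lambda>J. propagator V E a b * (J (b,a) * ?g J))"
    by (simp add: pd_D3_pow exp_poly_gauss pd_gauss_offdiag[OF ab])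
  also have "\<dots> = (\<lambda>J. propagator V E a b * (J (b,a) * (D3 NN ^^ k) ?g J
      - 3 * of_nat k * (complex_of_real V / complex_of_real (E a - E b))
        * ward_op NN a b ((D3 NN ^^ (k - 1)) ?g) J))"
    by (simp add: D3_pow_cmult exp_poly_coord_mult exp_poly_gauss D3_pow_coord_mult ab
        contract2_D3_pow_gauss[OF ab Epos Eab] mult.assoc)
  finally have e: "pd [(a,b)] ((D3 NN ^^ k) ?g) J = \<dots> J" by simp
  have nz: "complex_of_real (E a - E b) \<noteq> 0" "complex_of_real (E a + E b) \<noteq> 0"
    using Eab Epos[of a] Epos[of b] by (simp, metis add_pos_pos of_real_eq_0_iff less_irrefl)
  have "complex_of_real (E a ^ 2 - E b ^ 2) = complex_of_real (E a + E b) * complex_of_real (E a - E b)"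
    by (simp add: power2_eq_square algebra_simps)
  with nz show ?thesis
    unfolding e propagator_def of_real_mult
    by (simp add: field_simps power2_eq_square del: of_real_add of_real_diff)
qed

section \<open>Source-dependent formal power series\<close>

definition exp_poly_fps :: "(source \<Rightarrow> complex fps) \<Rightarrow> bool" where
  "exp_poly_fps F \<longleftrightarrow> (\<forall>n. (\<lambda>J. F J $ n) \<in> exp_poly)"

definition pd_fps :: "nat \<times> nat \<Rightarrow> (source \<Rightarrow> complex fps) \<Rightarrow> source \<Rightarrow> complex fps" where
  "pd_fps p F J = Abs_fps (\<lambda>n. pd [p] (\<lambda>J'. F J' $ n) J)"

lemma pd_fps_nth [simp]: "pd_fps p F J $ n = pd [p] (\<lambda>J'. F J' $ n) J"
  by (simp add: pd_fps_def)

lemma exp_poly_fps_nth: "exp_poly_fps F \<Longrightarrow> (\<lambda>J. F J $ n) \<in> exp_poly" by (simp add: exp_poly_fps_def)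

lemma exp_poly_fps_mult: "exp_poly_fps F \<Longrightarrow> exp_poly_fps G \<Longrightarrow> exp_poly_fps (\<lambda>J. F J * G J)"
  unfolding exp_poly_fps_def fps_mult_nth by (auto intro!: exp_poly_sum exp_poly_mult)

lemma exp_poly_fps_add: "exp_poly_fps F \<Longrightarrow> exp_poly_fps G \<Longrightarrow> exp_poly_fps (\<lambda>J. F J + G J)"
  unfolding exp_poly_fps_def by (auto intro!: exp_poly_add)

lemma exp_poly_fps_diff: "exp_poly_fps F \<Longrightarrow> exp_poly_fps G \<Longrightarrow> exp_poly_fps (\<lambda>J. F J - G J)"
  unfolding exp_poly_fps_def by (auto intro!: exp_poly_diff)

lemma exp_poly_fps_const: "exp_poly_fps (\<lambda>J. C)"
  unfolding exp_poly_fps_def by (auto intro!: exp_poly_const)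

lemma exp_poly_fps_fps_const:
  assumes "f \<in> exp_poly"
  shows "exp_poly_fps (\<lambda>J. fps_const (f J))"
proof -
  have "(\<lambda>J. fps_const (f J) $ n) \<in> exp_poly" for n
    using assms by (cases "n = 0") (auto intro: exp_poly_const)
  then show ?thesis unfolding exp_poly_fps_def by blast
qed

lemma exp_poly_fps_pow: "exp_poly_fps F \<Longrightarrow> exp_poly_fps (\<lambda>J. F J ^ i)"
  by (induction i) (auto intro: exp_poly_fps_mult exp_poly_fps_const)

lemma exp_poly_fps_deriv: "exp_poly_fps F \<Longrightarrow> exp_poly_fps (\<lambda>J. fps_deriv (F J))"
  unfolding exp_poly_fps_def by (auto intro!: exp_poly_cmult)

lemma pd_fps_mult:
  assumes F: "exp_poly_fps F" and G: "exp_poly_fps G"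
  shows "pd_fps p (\<lambda>J. F J * G J) J = pd_fps p F J * G J + F J * pd_fps p G J"
proof (rule fps_ext)
  fix n
  have "pd [p] (\<lambda>J. \<Sum>i=0..n. F J $ i * G J $ (n - i)) J
      = (\<Sum>i=0..n. pd [p] (\<lambda>J. F J $ i * G J $ (n - i)) J)"
    using pd_sum[of "{0..n}" "\<lambda>i J. F J $ i * G J $ (n - i)" p] F G
    by (simp add: exp_poly_mult exp_poly_fps_nth)
  also have "\<dots> = (\<Sum>i=0..n. pd [p] (\<lambda>J. F J $ i) J * G J $ (n - i)
      + F J $ i * pd [p] (\<lambda>J. G J $ (n - i)) J)"
    using F G by (simp add: pd_mult exp_poly_fps_nth)
  finally show "pd_fps p (\<lambda>J. F J * G J) J $ n = (pd_fps p F J * G J + F J * pd_fps p G J) $ n"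
    by (simp add: fps_mult_nth sum.distrib)
qed

lemma pd_fps_const: "pd_fps p (\<lambda>J. C) J = 0"
  by (rule fps_ext) (simp add: pd_const)

lemma pd_fps_deriv: "exp_poly_fps F \<Longrightarrow> pd_fps p (\<lambda>J. fps_deriv (F J)) J = fps_deriv (pd_fps p F J)"
  by (rule fps_ext) (simp add: pd_cmult exp_poly_fps_nth)

lemma fps_linear_ode_zero:
  fixes S A :: "'a::field_char_0 fps"
  assumes "fps_deriv S = A * S" "S $ 0 = 0"
  shows "S = 0"
proof -
  have "S $ n = 0" for n
  proof (induction n rule: less_induct)
    case (less n)
    show ?case
    proof (cases n)
      case 0 then show ?thesis using assms(2) by simp
    next
      case (Suc m)
      have "of_nat (m + 1) * S $ (m + 1) = (A * S) $ m" using assms(1) fps_deriv_nth[of S m] by simp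
      also have "\<dots> = (\<Sum>i=0..m. A $ i * S $ (m - i))" by (simp add: fps_mult_nth)
      also have "\<dots> = 0" using less Suc by (intro sum.neutral) auto
      finally have "(1 + of_nat m) * S $ Suc m = 0" by simp
      moreover have "(1 + of_nat m :: 'a) \<noteq> 0"
        by (metis of_nat_Suc of_nat_eq_0_iff nat.distinct(1) add.commute)
      ultimately show ?thesis using Suc by simp
    qed
  qed
  then show ?thesis by (intro fps_ext) simp
qed

section \<open>The logarithm of the partition function\<close>

text \<open>fps_log with the logarithm of the constant coefficient chosen as l0 J, so that it
  depends smoothly on the source.\<close>

definition log_branch :: "(source \<Rightarrow> complex fps) \<Rightarrow> (source \<Rightarrow> complex) \<Rightarrow> source \<Rightarrow> complex fps" where
  "log_branch R l0 J = fps_const (l0 J) + (fps_ln 1 oo (R J / fps_const (R J $ 0) - 1))"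

lemma fps_divide_fps_const:
  "(c::'a::field) \<noteq> 0 \<Longrightarrow> F / fps_const c = F * fps_const (inverse c)"
  by (simp add: fps_divide_unit fps_const_inverse)

locale log_branch_family =
  fixes R :: "source \<Rightarrow> complex fps" and l0 :: "source \<Rightarrow> complex"
  assumes exp_poly_fps_R: "exp_poly_fps R" and exp_poly_l0: "l0 \<in> exp_poly"
    and R_nth_0: "\<And>J. R J $ 0 = exp (l0 J)"
begin

definition log_arg where "log_arg J = R J * fps_const (exp (- l0 J)) - 1"

lemma log_arg_eq: "R J / fps_const (R J $ 0) - 1 = log_arg J"
  unfolding log_arg_def R_nth_0 by (simp add: fps_divide_fps_const exp_minus)

lemma log_arg_nth_0: "log_arg J $ 0 = 0"
  unfolding log_arg_def using R_nth_0[of J] by (simp add: exp_minus)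

lemma exp_poly_fps_log_arg: "exp_poly_fps log_arg"
  unfolding log_arg_def[abs_def]
  by (intro exp_poly_fps_diff exp_poly_fps_mult exp_poly_fps_R exp_poly_fps_fps_const
      exp_poly_fps_const exp_poly_exp exp_poly_uminus exp_poly_l0)

lemma log_branch_eq: "log_branch R l0 J = fps_const (l0 J) + (fps_ln 1 oo log_arg J)"
  unfolding log_branch_def log_arg_eq ..

lemma exp_poly_fps_log_branch: "exp_poly_fps (log_branch R l0)"
proof -
  have "(\<lambda>J. (fps_ln 1 oo log_arg J) $ n) \<in> exp_poly" for n
    unfolding fps_compose_nth
    using exp_poly_fps_pow[OF exp_poly_fps_log_arg]
    by (intro exp_poly_sum exp_poly_cmult) (auto simp: exp_poly_fps_def)
  then have "exp_poly_fps (\<lambda>J. fps_ln 1 oo log_arg J)" unfolding exp_poly_fps_def by blast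
  then show ?thesis
    unfolding log_branch_eq[abs_def] by (intro exp_poly_fps_add exp_poly_fps_fps_const exp_poly_l0)
qed

lemma log_branch_nth_0: "log_branch R l0 J $ 0 = l0 J"
  unfolding log_branch_eq by simp

lemma log_branch_deriv: "R J * fps_deriv (log_branch R l0 J) = fps_deriv (R J)"
proof -
  let ?g = "log_arg J" and ?e = "exp (l0 J)"
  have "fps_deriv (log_branch R l0 J) = (fps_deriv (fps_ln 1) oo ?g) * fps_deriv ?g"
    unfolding log_branch_eq by (simp add: fps_compose_deriv log_arg_nth_0)
  also have "fps_deriv (fps_ln 1) oo ?g = inverse (1 + ?g)"
  proof -
    have "fps_deriv (fps_ln (1::complex)) = inverse (1 + fps_X)" by (simp add: fps_ln_deriv)
    moreover have "inverse (1 + fps_X) oo ?g = inverse ((1 + fps_X) oo ?g)"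
      by (rule fps_inverse_compose) (simp_all add: log_arg_nth_0)
    moreover have "(1 + fps_X) oo ?g = 1 + ?g" by (simp add: fps_compose_add_distrib log_arg_nth_0)
    ultimately show ?thesis by simp
  qed
  finally have d: "fps_deriv (log_branch R l0 J) = inverse (1 + ?g) * fps_deriv ?g" .
  have RR: "R J = fps_const ?e * (1 + ?g)"
  proof -
    have "fps_const ?e * (1 + ?g) = fps_const ?e * (R J * fps_const (exp (- l0 J)))"
      unfolding log_arg_def by simp
    also have "\<dots> = R J * (fps_const ?e * fps_const (exp (- l0 J)))" by (simp only: ac_simps)
    also have "fps_const ?e * fps_const (exp (- l0 J)) = 1"
      by (simp only: fps_const_mult exp_minus_inverse fps_const_1_eq_1)
    finally show ?thesis by simp
  qed
  have inv: "(1 + ?g) * inverse (1 + ?g) = 1" by (rule inverse_mult_eq_1') (simp add: log_arg_nth_0)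
  have "R J * fps_deriv (log_branch R l0 J) = fps_const ?e * ((1 + ?g) * inverse (1 + ?g)) * fps_deriv ?g"
    unfolding d by (subst RR) (simp add: mult.assoc)
  also have "\<dots> = fps_deriv (R J)"
  proof -
    have "fps_deriv (R J) = fps_deriv (fps_const ?e * (1 + ?g))" using RR by (rule arg_cong)
    then show ?thesis unfolding inv by simp
  qed
  finally show ?thesis .
qed

text \<open>Differentiating R * L' = R' with respect to a source entry shows that R * \<partial>L - \<partial>R
  solves a linear ODE in the coupling with vanishing constant term, hence vanishes.\<close>

lemma pd_fps_log_branch: "R J * pd_fps p (log_branch R l0) J = pd_fps p R J"
proof -
  let ?L = "log_branch R l0"
  have "(\<lambda>J. R J * fps_deriv (?L J)) = (\<lambda>J. fps_deriv (R J))" using log_branch_deriv by blast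
  then have "pd_fps p (\<lambda>J. R J * fps_deriv (?L J)) J = pd_fps p (\<lambda>J. fps_deriv (R J)) J" by simp
  then have pd_log_deriv: "pd_fps p R J * fps_deriv (?L J) + R J * fps_deriv (pd_fps p ?L J)
      = fps_deriv (pd_fps p R J)"
    using exp_poly_fps_log_branch exp_poly_fps_R
    by (simp add: pd_fps_mult exp_poly_fps_deriv pd_fps_deriv)
  define S where "S = R J * pd_fps p ?L J - pd_fps p R J"
  have "fps_deriv S = fps_deriv (R J) * pd_fps p ?L J + R J * fps_deriv (pd_fps p ?L J)
      - fps_deriv (pd_fps p R J)"
    unfolding S_def by simp
  also have "\<dots> = fps_deriv (R J) * pd_fps p ?L J - pd_fps p R J * fps_deriv (?L J)"
    using pd_log_deriv by (simp add: algebra_simps)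
  also have "\<dots> = fps_deriv (?L J) * S"
    unfolding S_def log_branch_deriv[of J, symmetric] by (simp add: algebra_simps)
  finally have "fps_deriv S = fps_deriv (?L J) * S" .
  moreover have "S $ 0 = 0"
  proof -
    have "(\<lambda>J. ?L J $ 0) = l0" "(\<lambda>J. R J $ 0) = (\<lambda>J. exp (l0 J))"
      using log_branch_nth_0 R_nth_0 by auto
    then show ?thesis unfolding S_def using exp_poly_l0 by (simp add: pd_exp R_nth_0)
  qed
  ultimately have "S = 0" by (rule fps_linear_ode_zero)
  then show ?thesis unfolding S_def by simp
qed
end

section \<open>Ward identity for the partition function\<close>

definition coupling_coeff :: "real \<Rightarrow> nat \<Rightarrow> complex" where
  "coupling_coeff V k = complex_of_real ((- 1 / (3 * V^2)) ^ k / fact k)"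

lemma coupling_coeff_0 [simp]: "coupling_coeff V 0 = 1"
  by (simp add: coupling_coeff_def)

lemma coupling_coeff_Suc:
  assumes "V \<noteq> 0"
  shows "coupling_coeff V (Suc k) * (3 * of_nat (Suc k) * complex_of_real V ^ 2) = - coupling_coeff V k"
proof -
  define c where "c = - 1 / (3 * V^2)"
  have "c * (3 * V^2) = -1" unfolding c_def using assms by simp
  moreover have "c ^ Suc k / fact (Suc k) * (3 * real (Suc k) * V ^ 2) = c ^ k / fact k * (c * (3 * V^2))"
    by (simp add: field_simps del: of_nat_Suc)
  ultimately have "c ^ Suc k / fact (Suc k) * (3 * real (Suc k) * V ^ 2) = - (c ^ k / fact k)"
    by simp
  then show ?thesis unfolding coupling_coeff_def c_def[symmetric]
    by (metis (mono_tags, lifting) of_real_minus of_real_mult of_real_numeral of_real_of_nat_eq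
        of_real_power)
qed

definition ward_op_fps ::
    "nat \<Rightarrow> nat \<Rightarrow> nat \<Rightarrow> (source \<Rightarrow> complex fps) \<Rightarrow> source \<Rightarrow> complex fps" where
  "ward_op_fps NN a b F J =
     (\<Sum>n\<le>NN. fps_const (J (b,n)) * pd_fps (a,n) F J - fps_const (J (n,a)) * pd_fps (n,b) F J)"

lemma ward_op_fps_nth: "ward_op_fps NN a b F J $ k = ward_op NN a b (\<lambda>J. F J $ k) J"
  unfolding ward_op_fps_def ward_op_def by (simp add: fps_sum_nth)

locale matrix_model =
  fixes NN :: nat and V \<kappa> :: real and E :: "nat \<Rightarrow> real"
  assumes V_pos: "V > 0" and E_pos: "\<And>n. E n > 0"
    and E_inj: "\<And>x y. x \<le> NN \<Longrightarrow> y \<le> NN \<Longrightarrow> x \<noteq> y \<Longrightarrow> E x \<noteq> E y"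
begin

abbreviation "Z \<equiv> Zser NN V \<kappa> E"

lemma Z_nth: "Z J $ k = coupling_coeff V k * (D3 NN ^^ k) (gauss NN V \<kappa> E) J"
  unfolding Zser_def coupling_coeff_def gauss_def by simp

lemma exp_poly_fps_Z: "exp_poly_fps Z"
  unfolding exp_poly_fps_def Z_nth by (intro allI exp_poly_cmult exp_poly_D3_pow exp_poly_gauss)

lemma pd_Z_nth:
  "pd [p] (\<lambda>J. Z J $ k) J = coupling_coeff V k * pd [p] ((D3 NN ^^ k) (gauss NN V \<kappa> E)) J"
  unfolding Z_nth by (simp add: pd_cmult exp_poly_D3_pow exp_poly_gauss)

lemma ward_identity_Z:
  assumes ab: "a \<le> NN" "b \<le> NN" "a \<noteq> b"
  shows "fps_const (complex_of_real (E a ^ 2 - E b ^ 2)) * pd_fps (a,b) Z J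
     = fps_const (complex_of_real (V * (E a - E b)) * J (b,a)) * Z J + fps_X * ward_op_fps NN a b Z J"
proof (rule fps_ext)
  fix k
  let ?G = "gauss NN V \<kappa> E"
  have ward: "complex_of_real (E a ^ 2 - E b ^ 2) * pd [(a,b)] ((D3 NN ^^ k) ?G) J
     = complex_of_real (V * (E a - E b)) * J (b,a) * (D3 NN ^^ k) ?G J
       - 3 * of_nat k * complex_of_real V ^ 2 * ward_op NN a b ((D3 NN ^^ (k - 1)) ?G) J"
    by (rule ward_identity_D3_pow[OF ab E_pos E_inj[OF ab]])
  have ward_op_Z: "ward_op_fps NN a b Z J $ j = coupling_coeff V j * ward_op NN a b ((D3 NN ^^ j) ?G) J"
    for j
    unfolding ward_op_fps_nth ward_op_def by (simp add: pd_Z_nth sum_distrib_left algebra_simps)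
  show "(fps_const (complex_of_real (E a ^ 2 - E b ^ 2)) * pd_fps (a,b) Z J) $ k
     = (fps_const (complex_of_real (V * (E a - E b)) * J (b,a)) * Z J + fps_X * ward_op_fps NN a b Z J) $ k"
  proof (cases k)
    case 0
    then show ?thesis using ward by (simp add: pd_Z_nth Z_nth)
  next
    case (Suc j)
    have "(fps_const (complex_of_real (E a ^ 2 - E b ^ 2)) * pd_fps (a,b) Z J) $ k
       = coupling_coeff V k * (complex_of_real (E a ^ 2 - E b ^ 2) * pd [(a,b)] ((D3 NN ^^ k) ?G) J)"
      by (simp add: pd_Z_nth)
    also have "\<dots> = coupling_coeff V k * (complex_of_real (V * (E a - E b)) * J (b,a) * (D3 NN ^^ k) ?G J)
        - (coupling_coeff V k * (3 * of_nat k * complex_of_real V ^ 2))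
          * ward_op NN a b ((D3 NN ^^ (k - 1)) ?G) J"
      unfolding ward by (simp add: algebra_simps)
    also have "\<dots> = (fps_const (complex_of_real (V * (E a - E b)) * J (b,a)) * Z J
        + fps_X * ward_op_fps NN a b Z J) $ k"
      unfolding Suc coupling_coeff_Suc[OF less_imp_neq[OF V_pos, symmetric]]
      by (simp add: Z_nth ward_op_Z algebra_simps)
    finally show ?thesis .
  qed
qed

end

section \<open>Cyclic derivatives at vanishing source\<close>

lemma pd_at_0_coord_mult:
  assumes h: "h \<in> exp_poly" and q: "q \<notin> set ps1" "q \<notin> set ps2"
  shows "pd (ps1 @ q # ps2) (\<lambda>J. J q * h J) (\<lambda>_. 0) = pd (ps1 @ ps2) h (\<lambda>_. 0)"
proof -
  have "pd (ps1 @ q # ps2) (\<lambda>J. J q * h J) = pd [q] (pd (ps1 @ ps2) (\<lambda>J. J q * h J))"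
    using pd_move_front[OF exp_poly_coord_mult[OF h]] pd_Cons by metis
  also have "pd (ps1 @ ps2) (\<lambda>J. J q * h J) = (\<lambda>J. J q * pd (ps1 @ ps2) h J)"
    using q by (intro pd_coord_mult_notin h) auto
  finally show ?thesis by (simp add: pd_coord_mult exp_poly_pd h)
qed

lemma pd_at_0_coord_mult_notin:
  "h \<in> exp_poly \<Longrightarrow> q \<notin> set ps \<Longrightarrow> pd ps (\<lambda>J. J q * h J) (\<lambda>_. 0) = 0"
  using pd_coord_mult_notin by simp

lemma cycle_idx_Cons: "cycle_idx (a # bs) = zip (a # bs) (bs @ [a])"
  unfolding cycle_idx_def by simp

text \<open>Removing the edge (a1,a2) from the cycle through a1 # a2 # bs leaves the path
  zip (a2 # bs) (bs @ [a1]). Derivatives along this path at J = 0 kill every term of the Ward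
  operator except the ones that close it up to a shorter cycle.\<close>

lemma pd_cycle_path_left:
  assumes h: "h \<in> exp_poly" and dist: "distinct (a1 # a2 # bs)"
  shows "pd (zip (a2 # bs) (bs @ [a1])) (\<lambda>J. J (a2,n) * pd [(a1,n)] h J) (\<lambda>_. 0)
    = (if n = hd (bs @ [a1]) then pd (cycle_idx (a1 # bs)) h (\<lambda>_. 0) else 0)"
proof -
  define ys where "ys = bs @ [a1]"
  define a3 where "a3 = hd ys"
  have ys: "ys = a3 # tl ys" unfolding ys_def a3_def by (cases bs) auto
  have path: "zip (a2 # bs) ys = (a2, a3) # zip bs (tl ys)" by (subst ys) simp
  have notin: "(a2, m) \<notin> set (zip bs (tl ys))" for m
    using dist by (auto dest: set_zip_leftD)
  show ?thesis
  proof (cases "n = a3")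
    case True
    have "pd (zip (a2 # bs) ys) (\<lambda>J. J (a2,n) * pd [(a1,n)] h J) (\<lambda>_. 0)
        = pd (zip bs (tl ys) @ [(a1,a3)]) h (\<lambda>_. 0)"
      unfolding path True
      using pd_at_0_coord_mult[OF exp_poly_pd[OF h], of "(a2,a3)" "[]"] notin
      by (simp add: pd_append)
    also have "\<dots> = pd (cycle_idx (a1 # bs)) h (\<lambda>_. 0)"
    proof -
      have "cycle_idx (a1 # bs) = (a1,a3) # zip bs (tl ys)"
        unfolding cycle_idx_Cons ys_def[symmetric] by (subst ys) simp
      then show ?thesis by (intro fun_cong[OF pd_perm[OF h]]) simp
    qed
    finally show ?thesis using True unfolding ys_def a3_def by simp
  next
    case False
    then have "(a2,n) \<notin> set (zip (a2 # bs) ys)" unfolding path using notin by simp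
    then show ?thesis
      using False pd_at_0_coord_mult_notin[OF exp_poly_pd[OF h]] unfolding ys_def a3_def by simp
  qed
qed

lemma pd_cycle_path_right:
  assumes h: "h \<in> exp_poly" and dist: "distinct (a1 # a2 # bs)"
  shows "pd (zip (a2 # bs) (bs @ [a1])) (\<lambda>J. J (n,a1) * pd [(n,a2)] h J) (\<lambda>_. 0)
    = (if n = last (a2 # bs) then pd (cycle_idx (a2 # bs)) h (\<lambda>_. 0) else 0)"
proof -
  define xs where "xs = butlast (a2 # bs)"
  define z where "z = last (a2 # bs)"
  have xs: "a2 # bs = xs @ [z]" unfolding xs_def z_def by simp
  have len: "length xs = length bs" unfolding xs_def by simp
  have path: "zip (a2 # bs) (bs @ [a1]) = zip xs bs @ [(z, a1)]" unfolding xs using len by simp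
  have notin: "(m, a1) \<notin> set (zip xs bs)" for m
    using dist by (auto dest: set_zip_rightD)
  show ?thesis
  proof (cases "n = z")
    case True
    have "pd (zip (a2 # bs) (bs @ [a1])) (\<lambda>J. J (n,a1) * pd [(n,a2)] h J) (\<lambda>_. 0)
        = pd (zip xs bs @ [(z,a2)]) h (\<lambda>_. 0)"
      unfolding path True
      using pd_at_0_coord_mult[OF exp_poly_pd[OF h], of "(z,a1)" _ "[]"] notin
      by (simp add: pd_append)
    also have "\<dots> = pd (cycle_idx (a2 # bs)) h (\<lambda>_. 0)"
      unfolding cycle_idx_Cons by (subst xs) (simp add: len)
    finally show ?thesis using True unfolding z_def by simp
  next
    case False
    then have "(n,a1) \<notin> set (zip (a2 # bs) (bs @ [a1]))" unfolding path using notin by simp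
    then show ?thesis
      using False pd_at_0_coord_mult_notin[OF exp_poly_pd[OF h]] unfolding z_def by simp
  qed
qed

lemma pd_cycle_path_ward_op:
  assumes h: "h \<in> exp_poly" and dist: "distinct (a1 # a2 # bs)"
    and bnd: "set (a1 # a2 # bs) \<subseteq> {..NN}"
  shows "pd (zip (a2 # bs) (bs @ [a1])) (ward_op NN a1 a2 h) (\<lambda>_. 0)
    = pd (cycle_idx (a1 # bs)) h (\<lambda>_. 0) - pd (cycle_idx (a2 # bs)) h (\<lambda>_. 0)"
proof -
  have "hd (bs @ [a1]) \<le> NN" "last (a2 # bs) \<le> NN"
    using bnd by (cases bs, auto dest: last_in_set)
  moreover have A: "(\<lambda>J. J (a2,n) * pd [(a1,n)] h J) \<in> exp_poly"
    and B: "(\<lambda>J. J (n,a1) * pd [(n,a2)] h J) \<in> exp_poly" for n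
    by (intro exp_poly_coord_mult exp_poly_pd h)+
  ultimately show ?thesis
    unfolding ward_op_def pd_list_sum[OF finite_atMost exp_poly_diff[OF A B]] pd_list_diff[OF A B]
    by (simp add: sum_subtractf pd_cycle_path_left[OF h dist] pd_cycle_path_right[OF h dist])
qed

lemma pd_cycle_path_coord:
  assumes "distinct (a1 # a2 # bs)"
  shows "pd (zip (a2 # bs) (bs @ [a1])) (\<lambda>J. J (a2,a1)) (\<lambda>_. 0) = of_bool (bs = [])"
proof (cases bs)
  case Nil
  then show ?thesis using pd_at_0_coord_mult[OF exp_poly_const, of "(a2,a1)" "[]" "[]" 1] by simp
next
  case (Cons b bs')
  then have "(a2,a1) \<notin> set (zip (a2 # bs) (bs @ [a1]))"
    using assms by (auto dest: set_zip_leftD)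
  then show ?thesis using Cons pd_at_0_coord_mult_notin[OF exp_poly_const, of "(a2,a1)" _ 1] by simp
qed

lemma pd_cong_open:
  assumes U: "\<And>J p. J \<in> U \<Longrightarrow> open {t. J(p := t) \<in> U}"
    and fg: "\<And>J. J \<in> U \<Longrightarrow> f J = g J"
  shows "J \<in> U \<Longrightarrow> pd ps f J = pd ps g J"
proof (induction ps arbitrary: J)
  case (Cons p ps)
  have "J p \<in> {t. J(p := t) \<in> U}" using Cons.prems by simp
  then have "eventually (\<lambda>t. J(p := t) \<in> U) (nhds (J p))"
    using eventually_nhds_in_open[OF U[OF Cons.prems, of p]] by simp
  then have "eventually (\<lambda>t. pd ps f (J(p := t)) = pd ps g (J(p := t))) (nhds (J p))"
    by eventually_elim (rule Cons.IH)
  then show ?case unfolding pd.simps(2) by (rule deriv_cong_ev[OF _ refl])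
qed (use fg in simp)

lemma continuous_on_exp_poly_line: "f \<in> exp_poly \<Longrightarrow> continuous_on UNIV (\<lambda>t. f (J(p := t)))"
  using DERIV_isCont[OF has_field_derivative_pd, of f "J(p := t)" p for t]
  by (simp add: continuous_on_eq_continuous_at)

lemma open_line_Im_less_pi:
  assumes "l \<in> exp_poly"
  shows "open {t. J(p := t) \<in> {J. \<bar>Im (l J)\<bar> < pi}}"
proof -
  have "continuous_on UNIV (\<lambda>t. \<bar>Im (l (J(p := t)))\<bar>)"
    by (intro continuous_intros continuous_on_exp_poly_line assms)
  then have "open {t. \<bar>Im (l (J(p := t)))\<bar> < pi}"
    by (rule open_Collect_less) (rule continuous_on_const)
  then show ?thesis by simp
qed

context matrix_model
begin

definition Zn :: "source \<Rightarrow> complex fps" where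
  "Zn J = Z J / Z (\<lambda>_. 0)"

definition log_Zn0 :: "source \<Rightarrow> complex" where
  "log_Zn0 J = Qsrc NN V \<kappa> E J - Qsrc NN V \<kappa> E (\<lambda>_. 0)"

lemma Z_nth_0: "Z J $ 0 = exp (Qsrc NN V \<kappa> E J)"
  by (simp add: Z_nth gauss_def)

lemma Zn_eq: "Zn J = Z J * inverse (Z (\<lambda>_. 0))"
  unfolding Zn_def by (rule fps_divide_unit) (simp add: Z_nth_0)

lemma Zn_nth_0: "Zn J $ 0 = exp (log_Zn0 J)"
  by (simp add: Zn_eq Z_nth_0 log_Zn0_def exp_diff divide_inverse)

lemma Zn_nonzero: "Zn J \<noteq> 0"
  using Zn_nth_0[of J] by (metis exp_not_eq_zero fps_zero_nth)

lemma exp_poly_log_Zn0: "log_Zn0 \<in> exp_poly"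
  unfolding log_Zn0_def[abs_def]
  by (intro exp_poly_diff exp_poly_Qsrc[unfolded eta_contract_eq] exp_poly_const)

sublocale LS: log_branch_family Zn log_Zn0
proof
  show "exp_poly_fps Zn"
    unfolding Zn_eq[abs_def] by (intro exp_poly_fps_mult exp_poly_fps_Z exp_poly_fps_const)
qed (simp_all add: exp_poly_log_Zn0 Zn_nth_0)

abbreviation "logZn \<equiv> log_branch Zn log_Zn0"

lemma exp_poly_logZn_nth: "(\<lambda>J. logZn J $ k) \<in> exp_poly"
  using LS.exp_poly_fps_log_branch by (simp add: exp_poly_fps_def)

lemma pd_fps_Z: "pd_fps p Z J * inverse (Z (\<lambda>_. 0)) = Zn J * pd_fps p logZn J"
proof -
  have "Zn = (\<lambda>J. Z J * inverse (Z (\<lambda>_. 0)))" using Zn_eq by (intro ext) simp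
  then have "pd_fps p Zn J = pd_fps p Z J * inverse (Z (\<lambda>_. 0))"
    by (simp add: pd_fps_mult exp_poly_fps_Z exp_poly_fps_const pd_fps_const)
  then show ?thesis using LS.pd_fps_log_branch[of J p] by simp
qed

lemma ward_identity_logZ:
  assumes ab: "a \<le> NN" "b \<le> NN" "a \<noteq> b"
  shows "fps_const (complex_of_real (E a ^ 2 - E b ^ 2)) * pd_fps (a,b) logZn J
     = fps_const (complex_of_real (V * (E a - E b)) * J (b,a)) + fps_X * ward_op_fps NN a b logZn J"
proof -
  let ?x = "fps_const (complex_of_real (E a ^ 2 - E b ^ 2))"
  let ?c = "fps_const (complex_of_real (V * (E a - E b)) * J (b,a))"
  let ?i = "inverse (Z (\<lambda>_. 0))"
  have "ward_op_fps NN a b Z J * ?i = Zn J * ward_op_fps NN a b logZn J"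
    unfolding ward_op_fps_def sum_distrib_right sum_distrib_left
    by (intro sum.cong refl) (simp add: algebra_simps pd_fps_Z[symmetric])
  moreover have "?x * (pd_fps (a,b) Z J * ?i) = ?c * (Z J * ?i) + fps_X * (ward_op_fps NN a b Z J * ?i)"
    using arg_cong[OF ward_identity_Z[OF ab, of J], of "\<lambda>F. F * ?i"] by (simp add: algebra_simps)
  ultimately have "Zn J * (?x * pd_fps (a,b) logZn J - (?c + fps_X * ward_op_fps NN a b logZn J)) = 0"
    unfolding pd_fps_Z Zn_eq[symmetric] by (simp add: algebra_simps)
  then show ?thesis using Zn_nonzero by simp
qed

definition cyclic_pd :: "nat list \<Rightarrow> nat \<Rightarrow> complex" where
  "cyclic_pd as k = pd (cycle_idx as) (\<lambda>J. logZn J $ k) (\<lambda>_. 0)"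

lemma cyclic_pd_recursion:
  assumes dist: "distinct (a1 # a2 # bs)" and bnd: "set (a1 # a2 # bs) \<subseteq> {..NN}"
  shows "complex_of_real (E a1 ^ 2 - E a2 ^ 2) * cyclic_pd (a1 # a2 # bs) k
     = (if k = 0 then (if bs = [] then complex_of_real (V * (E a1 - E a2)) else 0)
        else cyclic_pd (a1 # bs) (k - 1) - cyclic_pd (a2 # bs) (k - 1))"
proof -
  let ?path = "zip (a2 # bs) (bs @ [a1])" and ?l = "\<lambda>k J. logZn J $ k"
  have ab: "a1 \<le> NN" "a2 \<le> NN" "a1 \<noteq> a2" using dist bnd by auto
  have "cyclic_pd (a1 # a2 # bs) k = pd (?path @ [(a1,a2)]) (?l k) (\<lambda>_. 0)"
    unfolding cyclic_pd_def cycle_idx_Cons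
    by (rule fun_cong[OF pd_perm[OF exp_poly_logZn_nth]]) simp
  then have "complex_of_real (E a1 ^ 2 - E a2 ^ 2) * cyclic_pd (a1 # a2 # bs) k
     = pd ?path (\<lambda>J. complex_of_real (E a1 ^ 2 - E a2 ^ 2) * pd [(a1,a2)] (?l k) J) (\<lambda>_. 0)"
    by (simp add: pd_append pd_list_cmult exp_poly_pd exp_poly_logZn_nth)
  also have "(\<lambda>J. complex_of_real (E a1 ^ 2 - E a2 ^ 2) * pd [(a1,a2)] (?l k) J)
     = (\<lambda>J. if k = 0 then complex_of_real (V * (E a1 - E a2)) * J (a2,a1)
         else ward_op NN a1 a2 (?l (k - 1)) J)"
    using arg_cong[OF ward_identity_logZ[OF ab], of "\<lambda>F. F $ k"]
    by (intro ext) (auto simp: fps_X_mult_nth ward_op_fps_nth)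
  finally show ?thesis
    using pd_list_cmult[OF exp_poly_coord, of ?path "complex_of_real (V * (E a1 - E a2))" "(a2,a1)"]
    by (auto simp: mult.commute cyclic_pd_def pd_cycle_path_coord[OF dist]
        pd_cycle_path_ward_op[OF exp_poly_logZn_nth dist bnd])
qed

abbreviation "Gc \<equiv> Gcorr NN V \<kappa> E"

text \<open>logZ takes the principal logarithm of the constant coefficient, which agrees with
  log_Zn0 J only where \<bar>Im (log_Zn0 J)\<bar> < pi. This is an open neighbourhood of J = 0, and
  derivatives at J = 0 only see a neighbourhood.\<close>

lemma Gcorr_nth: "Gc as $ k = complex_of_real (1 / V) * cyclic_pd as k"
proof -
  let ?U = "{J. \<bar>Im (log_Zn0 J)\<bar> < pi}"
  have "Ln (Zn J $ 0) = log_Zn0 J" if "J \<in> ?U" for J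
    unfolding Zn_nth_0 using that by (intro Ln_exp) auto
  then have "logZ NN V \<kappa> E J = logZn J" if "J \<in> ?U" for J
    using that unfolding logZ_def fps_log_def log_branch_def Zn_def[symmetric] by simp
  then have "pd (cycle_idx as) (\<lambda>J. logZ NN V \<kappa> E J $ k) (\<lambda>_. 0) = cyclic_pd as k"
    unfolding cyclic_pd_def
    by (intro pd_cong_open[OF open_line_Im_less_pi[OF exp_poly_log_Zn0]]) (simp_all add: log_Zn0_def)
  then show ?thesis unfolding Gcorr_def by simp
qed

lemma Gcorr_recursion:
  assumes dist: "distinct (a1 # a2 # bs)" and bnd: "set (a1 # a2 # bs) \<subseteq> {..NN}"
  shows "fps_const (complex_of_real (E a1 ^ 2 - E a2 ^ 2)) * Gc (a1 # a2 # bs)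
     = (if bs = [] then fps_const (complex_of_real (E a1 - E a2)) else 0)
       + fps_X * (Gc (a1 # bs) - Gc (a2 # bs))"
proof (rule fps_ext)
  fix k
  have "complex_of_real V \<noteq> 0" using V_pos by simp
  then show "(fps_const (complex_of_real (E a1 ^ 2 - E a2 ^ 2)) * Gc (a1 # a2 # bs)) $ k
     = ((if bs = [] then fps_const (complex_of_real (E a1 - E a2)) else 0)
       + fps_X * (Gc (a1 # bs) - Gc (a2 # bs))) $ k"
    using cyclic_pd_recursion[OF dist bnd, of k]
    by (auto simp: Gcorr_nth fps_X_mult_nth field_simps)
qed

end

section \<open>The closed formula\<close>

definition divided_diff_sum :: "('b \<Rightarrow> 'a) \<Rightarrow> ('b \<Rightarrow> 'b \<Rightarrow> 'a) \<Rightarrow> 'b set \<Rightarrow> 'a::comm_ring_1" where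
  "divided_diff_sum w p A = (\<Sum>b\<in>A. w b * (\<Prod>c\<in>A - {b}. p b c))"

lemma divided_diff_sum_singleton [simp]: "divided_diff_sum w p {a} = w a"
  by (simp add: divided_diff_sum_def)

text \<open>With p b c = 1 / (x b - x c) and k = x a1 - x a2 this is the recursion of divided
  differences.\<close>

lemma divided_diff_sum_insert2:
  fixes w :: "'b \<Rightarrow> 'a::comm_ring_1"
  assumes S: "finite S" "a1 \<notin> S" "a2 \<notin> S" "a1 \<noteq> a2"
    and pf: "\<And>b. b \<in> S \<Longrightarrow> k * p b a1 * p b a2 = p b a1 - p b a2"
    and inv: "k * p a1 a2 = 1" "k * p a2 a1 = -1"
  shows "k * divided_diff_sum w p (insert a1 (insert a2 S))
    = divided_diff_sum w p (insert a1 S) - divided_diff_sum w p (insert a2 S)"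
proof -
  let ?t = "\<lambda>b q. w b * (q * (\<Prod>c\<in>S - {b}. p b c))"
  have rm: "insert a1 (insert a2 S) - {b} = insert a1 (insert a2 (S - {b}))"
    "insert a1 S - {b} = insert a1 (S - {b})" "insert a2 S - {b} = insert a2 (S - {b})"
    if "b \<in> S" for b using S that by auto
  have "insert a1 (insert a2 S) - {a1} = insert a2 S" "insert a1 (insert a2 S) - {a2} = insert a1 S"
    "insert a1 S - {a1} = S" "insert a2 S - {a2} = S" using S by auto
  then have L: "divided_diff_sum w p (insert a1 (insert a2 S))
      = w a1 * (p a1 a2 * (\<Prod>c\<in>S. p a1 c)) + w a2 * (p a2 a1 * (\<Prod>c\<in>S. p a2 c))
        + (\<Sum>b\<in>S. ?t b (p b a1 * p b a2))"
    and R1: "divided_diff_sum w p (insert a1 S) = w a1 * (\<Prod>c\<in>S. p a1 c) + (\<Sum>b\<in>S. ?t b (p b a1))"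
    and R2: "divided_diff_sum w p (insert a2 S) = w a2 * (\<Prod>c\<in>S. p a2 c) + (\<Sum>b\<in>S. ?t b (p b a2))"
    unfolding divided_diff_sum_def using S by (simp_all add: rm mult.assoc add.assoc cong: sum.cong)
  have "k * (\<Sum>b\<in>S. ?t b (p b a1 * p b a2)) = (\<Sum>b\<in>S. ?t b (p b a1 - p b a2))"
    unfolding sum_distrib_left by (intro sum.cong refl) (simp add: pf[symmetric] ac_simps)
  also have "\<dots> = (\<Sum>b\<in>S. ?t b (p b a1)) - (\<Sum>b\<in>S. ?t b (p b a2))"
    by (simp add: sum_subtractf algebra_simps)
  finally have middle: "k * (\<Sum>b\<in>S. ?t b (p b a1 * p b a2))
      = (\<Sum>b\<in>S. ?t b (p b a1)) - (\<Sum>b\<in>S. ?t b (p b a2))" .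
  have "k * (w a1 * (p a1 a2 * (\<Prod>c\<in>S. p a1 c))) = w a1 * (\<Prod>c\<in>S. p a1 c)"
    using inv(1) by (metis mult.left_commute mult.assoc mult_1)
  moreover have "k * (w a2 * (p a2 a1 * (\<Prod>c\<in>S. p a2 c))) = - (w a2 * (\<Prod>c\<in>S. p a2 c))"
    using inv(2) by (metis mult.left_commute mult.assoc mult_minus1 mult_minus_left)
  ultimately show ?thesis unfolding L R1 R2 distrib_left middle by (simp add: algebra_simps)
qed

context matrix_model
begin

definition W :: "nat \<Rightarrow> complex fps" where
  "W b = fps_const 2 * fps_X * Gc [b] + fps_const (complex_of_real (2 * E b))"

definition P :: "nat \<Rightarrow> nat \<Rightarrow> complex fps" where
  "P b c = fps_const (complex_of_real (1 / ((E b)^2 - (E c)^2)))"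

lemma E_sq_neq: "x \<le> NN \<Longrightarrow> y \<le> NN \<Longrightarrow> x \<noteq> y \<Longrightarrow> E x ^ 2 - E y ^ 2 \<noteq> 0"
  using E_inj E_pos by (metis less_eq_real_def power2_eq_iff_nonneg right_minus_eq)

lemma fps_const_of_real_mult:
  "fps_const (complex_of_real r) * fps_const (complex_of_real s) = fps_const (complex_of_real (r * s))"
  by simp

lemma divided_diff_sum_W_P_insert2:
  assumes "finite S" "S \<subseteq> {..NN}" "a1 \<le> NN" "a2 \<le> NN" "a1 \<notin> S" "a2 \<notin> S" "a1 \<noteq> a2"
  shows "fps_const (complex_of_real (E a1 ^ 2 - E a2 ^ 2)) * divided_diff_sum W P (insert a1 (insert a2 S))
    = divided_diff_sum W P (insert a1 S) - divided_diff_sum W P (insert a2 S)"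
proof (rule divided_diff_sum_insert2)
  fix z assume "z \<in> S"
  then have "E z ^ 2 - E a1 ^ 2 \<noteq> 0" "E z ^ 2 - E a2 ^ 2 \<noteq> 0"
    using assms E_sq_neq by auto
  then have "(E a1 ^ 2 - E a2 ^ 2) * (1 / (E z ^ 2 - E a1 ^ 2)) * (1 / (E z ^ 2 - E a2 ^ 2))
      = 1 / (E z ^ 2 - E a1 ^ 2) - 1 / (E z ^ 2 - E a2 ^ 2)"
    by (simp add: field_simps)
  then show "fps_const (complex_of_real (E a1 ^ 2 - E a2 ^ 2)) * P z a1 * P z a2 = P z a1 - P z a2"
    unfolding P_def fps_const_of_real_mult by (metis fps_const_sub of_real_diff)
next
  have "E a1 ^ 2 - E a2 ^ 2 \<noteq> 0" "E a2 ^ 2 - E a1 ^ 2 \<noteq> 0" using assms E_sq_neq by auto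
  then have "(E a1 ^ 2 - E a2 ^ 2) * (1 / (E a1 ^ 2 - E a2 ^ 2)) = 1"
    "(E a1 ^ 2 - E a2 ^ 2) * (1 / (E a2 ^ 2 - E a1 ^ 2)) = -1"
    by (simp_all add: field_simps)
  then show "fps_const (complex_of_real (E a1 ^ 2 - E a2 ^ 2)) * P a1 a2 = 1"
    "fps_const (complex_of_real (E a1 ^ 2 - E a2 ^ 2)) * P a2 a1 = -1"
    unfolding P_def fps_const_of_real_mult by simp_all
qed (use assms in auto)

lemma Gcorr_closed_form:
  "distinct (a1 # a2 # bs) \<Longrightarrow> set (a1 # a2 # bs) \<subseteq> {..NN} \<Longrightarrow>
    Gc (a1 # a2 # bs) = fps_const (1/2) * fps_X ^ length bs * divided_diff_sum W P (set (a1 # a2 # bs))"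
proof (induction bs arbitrary: a1 a2)
  case Nil
  let ?k = "fps_const (complex_of_real (E a1 ^ 2 - E a2 ^ 2))"
  have k: "?k \<noteq> 0" using Nil.prems E_sq_neq[of a1 a2] 
    by (simp only: fps_const_eq_0_iff of_real_eq_0_iff) auto
  have "?k * Gc [a1, a2] = fps_const (complex_of_real (E a1 - E a2)) + fps_X * (Gc [a1] - Gc [a2])"
    using Gcorr_recursion[OF Nil.prems] by simp
  also have "\<dots> = fps_const (1/2) * (W a1 - W a2)"
    by (rule fps_ext) (simp add: W_def fps_X_mult_nth algebra_simps)
  also have "\<dots> = ?k * (fps_const (1/2) * divided_diff_sum W P {a1, a2})"
    using divided_diff_sum_W_P_insert2[of "{}" a1 a2] Nil.prems by (simp add: ac_simps)
  finally show ?case using k by simp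
next
  case (Cons b bs)
  let ?k = "fps_const (complex_of_real (E a1 ^ 2 - E a2 ^ 2))" and ?S = "set (b # bs)"
  have k: "?k \<noteq> 0" using Cons.prems E_sq_neq[of a1 a2] 
    by (simp only: fps_const_eq_0_iff of_real_eq_0_iff) auto
  have "?k * Gc (a1 # a2 # b # bs) = fps_X * (Gc (a1 # b # bs) - Gc (a2 # b # bs))"
    using Gcorr_recursion[OF Cons.prems] by simp
  also have "\<dots> = fps_const (1/2) * fps_X ^ length (b # bs)
      * (divided_diff_sum W P (insert a1 ?S) - divided_diff_sum W P (insert a2 ?S))"
    using Cons.IH[of a1 b] Cons.IH[of a2 b] Cons.prems by (simp add: algebra_simps)
  also have "\<dots> = ?k * (fps_const (1/2) * fps_X ^ length (b # bs)
      * divided_diff_sum W P (set (a1 # a2 # b # bs)))"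
    using divided_diff_sum_W_P_insert2[of ?S a1 a2] Cons.prems by (simp add: ac_simps)
  finally show ?case using k by simp
qed

end

lemma divided_diff_sum_image:
  assumes "inj_on a I"
  shows "divided_diff_sum w p (a ` I) = (\<Sum>k\<in>I. w (a k) * (\<Prod>l\<in>I - {k}. p (a k) (a l)))"
proof -
  have "a ` I - {a k} = a ` (I - {k})" "inj_on a (I - {k})" if "k \<in> I" for k
    using assms that by (auto simp: inj_on_eq_iff inj_on_diff)
  then show ?thesis
    unfolding divided_diff_sum_def sum.reindex[OF assms]
    by (intro sum.cong refl) (simp add: prod.reindex)
qed

lemma Eval_pos:
  assumes "\<mu> > 0" "V > 0" "\<forall>x\<ge>0. e x \<ge> 0"
  shows "Eval \<mu> V e n > 0"
  using assms unfolding Eval_def by (simp add: add_pos_nonneg)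

lemma Eval_inj:
  assumes "\<mu> > 0" "V > 0" "strict_mono_on {0..} e" and "x \<noteq> y"
  shows "Eval \<mu> V e x \<noteq> Eval \<mu> V e y"
proof -
  have "real x / (\<mu>^2 * V) \<noteq> real y / (\<mu>^2 * V)" "real x / (\<mu>^2 * V) \<ge> 0" "real y / (\<mu>^2 * V) \<ge> 0"
    using assms by auto
  then have "e (real x / (\<mu>^2 * V)) \<noteq> e (real y / (\<mu>^2 * V))"
    by (metis strict_mono_on_eqD[OF assms(3)] atLeast_iff)
  then show ?thesis using assms(1) unfolding Eval_def by simp
qed

theorem proposition2:
  fixes NN :: nat and V \<mu> \<kappa> :: real and e :: "real \<Rightarrow> real"
    and N :: nat and a :: "nat \<Rightarrow> nat"
  assumes "NN \<ge> 1" and "V > 0" and "\<mu> > 0"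
    and "strict_mono_on {0..} e" and "e 0 = 0" and "\<forall>x\<ge>0. e x \<ge> 0"
    and "\<forall>x\<ge>0. e differentiable (at x within {0..})"
    and "N \<ge> 2" and "inj_on a {1..N}" and "\<forall>k\<in>{1..N}. a k \<le> NN"
  shows "let E = Eval \<mu> V e;
             W = (\<lambda>b. fps_const 2 * fps_X * Gcorr NN V \<kappa> E [b]
                        + fps_const (complex_of_real (2 * E b)));
             P = (\<lambda>b c. complex_of_real (1 / ((E b)^2 - (E c)^2)))
         in Gcorr NN V \<kappa> E (map a [1..<N+1])
            = fps_const (1/2) * fps_X ^ (N - 2)
              * (\<Sum>k=1..N. W (a k) * (\<Prod>l\<in>{1..N} - {k}. fps_const (P (a k) (a l))))"
proof -
  interpret matrix_model NN V \<kappa> "Eval \<mu> V e"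
    using assms(2) Eval_pos[OF assms(3,2,6)] Eval_inj[OF assms(3,2,4)] by unfold_locales
  define bs where "bs = map a [3..<N+1]"
  have "[1..<N+1] = 1 # 2 # [3..<N+1]"
    using assms(8) by (simp add: upt_conv_Cons numeral_2_eq_2 numeral_3_eq_3)
  then have as: "map a [1..<N+1] = a 1 # a 2 # bs" unfolding bs_def by simp
  have "set [1..<N+1] = {1..N}" by auto
  then have "set (a 1 # a 2 # bs) = a ` {1..N}" "distinct (a 1 # a 2 # bs)"
    using assms(9) unfolding as[symmetric] distinct_map set_map by simp_all
  moreover have "set (a 1 # a 2 # bs) \<subseteq> {..NN}"
    using assms(10) unfolding as[symmetric] by auto
  moreover have "length bs = N - 2" unfolding bs_def using assms(8) by auto
  ultimately have "Gc (map a [1..<N+1])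
      = fps_const (1/2) * fps_X ^ (N - 2) * divided_diff_sum W P (a ` {1..N})"
    unfolding as using Gcorr_closed_form[of "a 1" "a 2" bs] by simp
  then show ?thesis
    unfolding Let_def divided_diff_sum_image[OF assms(9)] W_def P_def .
qed

end
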